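(* Let $q\ge 2$ be an integer, $s\in(0,2)$, and let $P(x,t)=|\Psi(x,t)|^2$ be as in the context. Then for Lebesgue-almost every $x\in[0,\pi]$ the graph of $t\mapsto P(x,t)$ over any compact interval $[a,b]$ with $a<b$ has box-counting dimension $D_t=1+s/2$.
   Context: For an integer $q\ge2$ and $s\in(0,2)$ define, for $x\in[0,\pi]$ and $t\in\mathbb R$, $$\Psi(x,t)=N\sum_{n=0}^{\infty} q^{n(s-2)}\sin(q^n x)\,e^{-i q^{2n} t},\qquad N=\sqrt{\tfrac{2}{\pi}\big(1-q^{2(s-2)}\big)},$$ a uniformly convergent series. Let $P(x,t)=|\Psi(x,t)|^2$. For a bounded set $A\subset\mathbb R^d$ let $N(\delta)$ be the number of cubes $[m_1\delta,(m_1+1)\delta]\times\dots\times[m_d\delta,(m_d+1)\delta]$, $m_i\in\mathbb Z$, meeting $A$. The upper and lower box-counting dimensions are $\limsup_{\delta\to0}$ and $\liminf_{\delta\to0}$ of $\ln N(\delta)/\ln(1/\delta)$. The box-counting dimension exists when these two coincide, and is then their common value. *)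

theory Defs
  imports "HOL-Analysis.Analysis"
begin

definition NormConst :: "nat \<Rightarrow> real \<Rightarrow> real" where
  "NormConst q s = sqrt (2 / pi * (1 - real q powr (2 * (s - 2))))"

definition Psi :: "nat \<Rightarrow> real \<Rightarrow> real \<Rightarrow> real \<Rightarrow> complex" where
  "Psi q s x t = complex_of_real (NormConst q s) *
     (\<Sum>n. complex_of_real (real q powr (real n * (s - 2)) * sin (real q ^ n * x))
            * cis (- (real q ^ (2 * n) * t)))"

definition Pdens :: "nat \<Rightarrow> real \<Rightarrow> real \<Rightarrow> real \<Rightarrow> real" where
  "Pdens q s x t = (cmod (Psi q s x t))\<^sup>2"

definition box_count :: "real \<Rightarrow> (real \<times> real) set \<Rightarrow> nat" where
  "box_count \<delta> A = card {m :: int \<times> int. \<exists>(u, v) \<in> A.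
      of_int (fst m) * \<delta> \<le> u \<and> u \<le> (of_int (fst m) + 1) * \<delta> \<and>
      of_int (snd m) * \<delta> \<le> v \<and> v \<le> (of_int (snd m) + 1) * \<delta>}"

definition upper_box_dim :: "(real \<times> real) set \<Rightarrow> ereal" where
  "upper_box_dim A = Limsup (at_right 0)
     (\<lambda>\<delta>. ereal (ln (real (box_count \<delta> A)) / ln (1 / \<delta>)))"

definition lower_box_dim :: "(real \<times> real) set \<Rightarrow> ereal" where
  "lower_box_dim A = Liminf (at_right 0)
     (\<lambda>\<delta>. ereal (ln (real (box_count \<delta> A)) / ln (1 / \<delta>)))"

definition has_box_dim :: "(real \<times> real) set \<Rightarrow> real \<Rightarrow> bool" where
  "has_box_dim A D \<longleftrightarrow> upper_box_dim A = ereal D \<and> lower_box_dim A = ereal D"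

end

theory Submission
  imports Defs "HOL-Real_Asymp.Real_Asymp"
begin

(*
  Upper bound: for every beta < 1 - s/2 the density P(x, .) is beta-Hoelder, because
  |e^(i q^(2n) t) - e^(i q^(2n) t')| <= 2 (q^(2n) |t - t'|)^beta is summable against the
  coefficients c_n = q^(n(s-2)) sin(q^n x); a beta-Hoelder graph meets O(delta^(beta-2)) cells.

  Lower bound: take delta = 2 pi / omega with omega = q^(2n) - q^(2k). Every grid column is then a
  full period of e^(i omega t), so the integral of P e^(i omega t) over a column is at most delta
  times the oscillation of P there, and the column meets at least (oscillation / delta) - 1 cells.
  Summing over columns, the box count is at least |integral P e^(i omega t)| / delta^2 minus the
  number of columns. Expanding P = |Psi|^2, this Fourier coefficient is N^2 c_n c_k times the
  length of the interval, up to O(|c_n| / q^(2k) + 1 / q^(2n)), because the frequencies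
  q^(2m) grow by a factor of at least 4. By Borel-Cantelli, for almost every x we have
  |sin(q^n x)| >= q^(-e n) eventually, for every e > 0; fixing k with |c_k| large and letting
  n grow, the box count at scale about q^(-2n) is at least of order q^((s + 2 - e) n).
*)

section \<open>Counting grid cells\<close>

abbreviation graph_on :: "real set \<Rightarrow> (real \<Rightarrow> real) \<Rightarrow> (real \<times> real) set" where
  "graph_on S f \<equiv> (\<lambda>t. (t, f t)) ` S"

definition grid_cells :: "real \<Rightarrow> (real \<times> real) set \<Rightarrow> (int \<times> int) set" where
  "grid_cells \<delta> A = {m. \<exists>(u, v) \<in> A.
      of_int (fst m) * \<delta> \<le> u \<and> u \<le> (of_int (fst m) + 1) * \<delta> \<and>
      of_int (snd m) * \<delta> \<le> v \<and> v \<le> (of_int (snd m) + 1) * \<delta>}"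

lemma box_count_eq_card_grid_cells: "box_count \<delta> A = card (grid_cells \<delta> A)"
  unfolding box_count_def grid_cells_def ..

lemma mem_grid_cells_graph:
  "(j, m) \<in> grid_cells \<delta> (graph_on S f) \<longleftrightarrow>
    (\<exists>t\<in>S. of_int j * \<delta> \<le> t \<and> t \<le> (of_int j + 1) * \<delta> \<and>
       of_int m * \<delta> \<le> f t \<and> f t \<le> (of_int m + 1) * \<delta>)"
  unfolding grid_cells_def by auto

lemma grid_index_mem:
  assumes "0 < \<delta>" "of_int m * \<delta> \<le> u" "u \<le> (of_int m + 1) * \<delta>" "l \<le> u" "u \<le> h"
  shows "m \<in> {\<lceil>l / \<delta>\<rceil> - 1..\<lfloor>h / \<delta>\<rfloor>}"
proof -
  have "of_int m \<le> h / \<delta>" "l / \<delta> \<le> of_int (m + 1)"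
    using assms by (simp_all add: field_simps)
  then have "m \<le> \<lfloor>h / \<delta>\<rfloor>" "\<lceil>l / \<delta>\<rceil> \<le> m + 1"
    by (simp_all only: le_floor_iff ceiling_le_iff)
  then show ?thesis by simp
qed

lemma card_grid_index_range_le:
  assumes "0 < \<delta>" "l \<le> h"
  shows "real (card {\<lceil>l / \<delta>\<rceil> - 1..\<lfloor>h / \<delta>\<rfloor>}) \<le> (h - l) / \<delta> + 2"
proof -
  have "l / \<delta> \<le> h / \<delta>" using assms by (simp add: divide_right_mono)
  moreover have "real_of_int (\<lfloor>h / \<delta>\<rfloor> - (\<lceil>l / \<delta>\<rceil> - 1) + 1) \<le> h / \<delta> - l / \<delta> + 2"
    using of_int_floor_le[of "h / \<delta>"] le_of_int_ceiling[of "l / \<delta>"] by linarith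
  ultimately show ?thesis by (simp add: diff_divide_distrib)
qed

lemma card_Icc_floor_ceiling_ge: "y - x - 1 \<le> real (card {\<lceil>x\<rceil>..\<lfloor>y\<rfloor>})"
  using real_of_int_floor_gt_diff_one[of y] of_int_ceiling_le_add_one[of x] by simp linarith

lemma finite_grid_cells:
  assumes "bounded A" "0 < \<delta>"
  shows "finite (grid_cells \<delta> A)"
proof -
  obtain R where R: "\<And>z. z \<in> A \<Longrightarrow> norm z \<le> R"
    using assms(1) bounded_iff by blast
  define I where "I = {\<lceil>- R / \<delta>\<rceil> - 1..\<lfloor>R / \<delta>\<rfloor>}"
  have "-R \<le> u \<and> u \<le> R \<and> -R \<le> v \<and> v \<le> R" if "(u, v) \<in> A" for u v
    using R[OF that] norm_fst_le[of u v] norm_snd_le[of v u] by auto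
  then have "grid_cells \<delta> A \<subseteq> I \<times> I"
    unfolding grid_cells_def I_def using assms(2)
    by (fastforce intro: grid_index_mem[where l = "-R" and h = R])
  then show ?thesis
    by (rule finite_subset) (simp add: I_def)
qed

lemma bounded_graph_on:
  assumes "continuous_on {a..b} f"
  shows "bounded (graph_on {a..b} f)"
  by (intro compact_imp_bounded compact_continuous_image continuous_intros assms) simp

lemma box_count_graph_le:
  fixes f :: "real \<Rightarrow> real"
  assumes "0 < \<delta>" "a \<le> b" "0 \<le> h"
    and osc: "\<And>t t'. \<bar>t - t'\<bar> \<le> \<delta> \<Longrightarrow> \<bar>f t - f t'\<bar> \<le> h"
  shows "real (box_count \<delta> (graph_on {a..b} f)) \<le> ((b - a) / \<delta> + 2) * (2 * h / \<delta> + 2)"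
proof -
  define J where "J = {\<lceil>a / \<delta>\<rceil> - 1..\<lfloor>b / \<delta>\<rfloor>}"
  define M where
    "M j = {\<lceil>(f (of_int j * \<delta>) - h) / \<delta>\<rceil> - 1..\<lfloor>(f (of_int j * \<delta>) + h) / \<delta>\<rfloor>}" for j
  have "grid_cells \<delta> (graph_on {a..b} f) \<subseteq> Sigma J M"
  proof safe
    fix j m assume "(j, m) \<in> grid_cells \<delta> (graph_on {a..b} f)"
    then obtain t where t: "t \<in> {a..b}" "of_int j * \<delta> \<le> t" "t \<le> (of_int j + 1) * \<delta>"
      "of_int m * \<delta> \<le> f t" "f t \<le> (of_int m + 1) * \<delta>"
      unfolding mem_grid_cells_graph by blast
    then show "j \<in> J"
      unfolding J_def using assms(1) by (intro grid_index_mem) auto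
    have "\<bar>f t - f (of_int j * \<delta>)\<bar> \<le> h"
      using t by (intro osc) (simp add: algebra_simps)
    then show "m \<in> M j"
      unfolding M_def using t assms(1) by (intro grid_index_mem) auto
  qed
  then have "card (grid_cells \<delta> (graph_on {a..b} f)) \<le> card (Sigma J M)"
    by (rule card_mono[rotated]) (simp add: J_def M_def)
  also have "card (Sigma J M) = (\<Sum>j\<in>J. card (M j))"
    by (rule card_SigmaI) (simp_all add: J_def M_def)
  finally have "real (box_count \<delta> (graph_on {a..b} f)) \<le> (\<Sum>j\<in>J. real (card (M j)))"
    unfolding box_count_eq_card_grid_cells of_nat_sum[symmetric] of_nat_le_iff .
  also have "\<dots> \<le> (\<Sum>j\<in>J. 2 * h / \<delta> + 2)"
  proof (rule sum_mono)
    fix j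
    have "real (card (M j)) \<le> ((f (of_int j * \<delta>) + h) - (f (of_int j * \<delta>) - h)) / \<delta> + 2"
      unfolding M_def using assms by (intro card_grid_index_range_le) auto
    then show "real (card (M j)) \<le> 2 * h / \<delta> + 2" by simp
  qed
  also have "\<dots> \<le> ((b - a) / \<delta> + 2) * (2 * h / \<delta> + 2)"
    using card_grid_index_range_le[OF assms(1,2)] assms
    by (simp add: J_def mult_right_mono)
  finally show ?thesis .
qed

lemma card_grid_cells_le_coarser:
  assumes "0 < \<delta>" "\<delta> \<le> \<delta>'" "finite (grid_cells \<delta> A)"
  shows "card (grid_cells \<delta>' A) \<le> 9 * card (grid_cells \<delta> A)"
proof -
  define I where "I i = {\<lceil>of_int i * \<delta> / \<delta>'\<rceil> - 1..\<lfloor>(of_int i + 1) * \<delta> / \<delta>'\<rfloor>}" for i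
  have card_I: "card (I i) \<le> 3" for i
  proof -
    have "real (card (I i)) \<le> ((of_int i + 1) * \<delta> - of_int i * \<delta>) / \<delta>' + 2"
      unfolding I_def using assms by (intro card_grid_index_range_le) auto
    also have "\<dots> \<le> 3" using assms by (simp add: algebra_simps)
    finally show ?thesis by simp
  qed
  have floor_cell: "of_int \<lfloor>u / \<delta>\<rfloor> * \<delta> \<le> u" "u \<le> (of_int \<lfloor>u / \<delta>\<rfloor> + 1) * \<delta>" for u
  proof -
    show "of_int \<lfloor>u / \<delta>\<rfloor> * \<delta> \<le> u"
      using assms(1) of_int_floor_le[of "u / \<delta>"] by (simp only: pos_le_divide_eq)
    show "u \<le> (of_int \<lfloor>u / \<delta>\<rfloor> + 1) * \<delta>"
      using assms(1) real_of_int_floor_add_one_ge[of "u / \<delta>"] by (simp only: pos_divide_le_eq)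
  qed
  have "grid_cells \<delta>' A \<subseteq> (\<Union>c\<in>grid_cells \<delta> A. I (fst c) \<times> I (snd c))"
  proof
    fix m assume "m \<in> grid_cells \<delta>' A"
    then obtain u v where uv: "(u, v) \<in> A" "of_int (fst m) * \<delta>' \<le> u" "u \<le> (of_int (fst m) + 1) * \<delta>'"
      "of_int (snd m) * \<delta>' \<le> v" "v \<le> (of_int (snd m) + 1) * \<delta>'"
      unfolding grid_cells_def by auto
    have "(\<lfloor>u / \<delta>\<rfloor>, \<lfloor>v / \<delta>\<rfloor>) \<in> grid_cells \<delta> A"
      unfolding grid_cells_def using uv(1) floor_cell[of u] floor_cell[of v] by force
    moreover have "\<delta>' > 0" using assms by simp
    then have "fst m \<in> I \<lfloor>u / \<delta>\<rfloor>" "snd m \<in> I \<lfloor>v / \<delta>\<rfloor>"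
      unfolding I_def by (rule grid_index_mem[OF _ uv(2,3) floor_cell] grid_index_mem[OF _ uv(4,5) floor_cell])+
    ultimately show "m \<in> (\<Union>c\<in>grid_cells \<delta> A. I (fst c) \<times> I (snd c))"
      by (cases m) force
  qed
  then have "card (grid_cells \<delta>' A) \<le> card (\<Union>c\<in>grid_cells \<delta> A. I (fst c) \<times> I (snd c))"
    by (rule card_mono[rotated]) (simp add: assms(3) I_def)
  also have "\<dots> \<le> (\<Sum>c\<in>grid_cells \<delta> A. card (I (fst c) \<times> I (snd c)))"
    by (rule card_UN_le[OF assms(3)])
  also have "\<dots> \<le> (\<Sum>c\<in>grid_cells \<delta> A. 9)"
    by (intro sum_mono) (simp add: card_cartesian_product mult_le_mono[OF card_I card_I, simplified])
  finally show ?thesis by simp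
qed

lemma upper_box_dim_le_of_power_bound:
  assumes "0 \<le> \<gamma>" "1 \<le> C"
    and bound: "\<And>\<delta>. 0 < \<delta> \<Longrightarrow> \<delta> < 1 \<Longrightarrow> real (box_count \<delta> A) \<le> C * \<delta> powr (- \<gamma>)"
  shows "upper_box_dim A \<le> ereal \<gamma>"
proof -
  have "\<forall>\<^sub>F \<delta> in at_right 0. ln (real (box_count \<delta> A)) / ln (1 / \<delta>) \<le> \<gamma> + ln C / ln (1 / \<delta>)"
    unfolding eventually_at_right_field
  proof (intro exI[of _ 1] conjI allI impI)
    fix \<delta> :: real assume \<delta>: "0 < \<delta>" "\<delta> < 1"
    have L: "0 < ln (1 / \<delta>)" using \<delta> by simp
    have "ln (real (box_count \<delta> A)) \<le> ln C + \<gamma> * ln (1 / \<delta>)"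
    proof (cases "box_count \<delta> A = 0")
      case False
      then have "ln (real (box_count \<delta> A)) \<le> ln (C * \<delta> powr (- \<gamma>))"
        using bound[OF \<delta>] by simp
      also have "\<dots> = ln C + \<gamma> * ln (1 / \<delta>)"
        using \<delta> assms(2) by (simp add: ln_mult ln_powr ln_div)
      finally show ?thesis .
    qed (use assms L in simp)
    then show "ln (real (box_count \<delta> A)) / ln (1 / \<delta>) \<le> \<gamma> + ln C / ln (1 / \<delta>)"
      using L by (simp add: field_simps)
  qed simp
  then have "upper_box_dim A \<le> Limsup (at_right 0) (\<lambda>\<delta>. ereal (\<gamma> + ln C / ln (1 / \<delta>)))"
    unfolding upper_box_dim_def by (intro Limsup_mono) simp
  also have "\<dots> = ereal \<gamma>"
    by (intro lim_imp_Limsup tendsto_ereal) (simp_all, real_asymp)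
  finally show ?thesis .
qed

lemma tendsto_0_bracket:
  fixes d :: "nat \<Rightarrow> real"
  assumes "d \<longlonglongrightarrow> 0" "\<delta> < d n0" "0 < \<delta>"
  obtains n where "n0 \<le> n" "d (Suc n) \<le> \<delta>" "\<delta> < d n"
proof -
  have "\<exists>n\<ge>n0. d (Suc n) \<le> \<delta> \<and> \<delta> < d n"
  proof (rule ccontr)
    assume "\<not> ?thesis"
    then have step: "\<delta> < d n \<Longrightarrow> \<delta> < d (Suc n)" if "n0 \<le> n" for n
      using that by (meson not_le)
    have "\<delta> < d n" if "n0 \<le> n" for n
      using that by (induction n rule: dec_induct) (use assms(2) step in auto)
    then have "\<forall>\<^sub>F n in sequentially. \<delta> < d n"
      unfolding eventually_sequentially by blast
    moreover have "\<forall>\<^sub>F n in sequentially. d n < \<delta>"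
      using order_tendstoD(2)[OF assms(1,3)] .
    ultimately have "\<forall>\<^sub>F n in sequentially. False"
      by eventually_elim simp
    then show False by simp
  qed
  then show ?thesis using that by blast
qed

lemma box_count_log_ratio_ge:
  assumes "bounded A" "0 < \<delta>" "0 < d'" "d' \<le> \<delta>" "\<delta> < d" "d < 1" "0 < C" "0 < L" "0 < B" "0 < Q"
    and "C * L ^ n \<le> real (box_count d A)" "1 / d' \<le> B * Q ^ Suc n"
    and "0 \<le> ln (C / 9) + real n * ln L"
  shows "(ln (C / 9) + real n * ln L) / (ln B + real (Suc n) * ln Q)
    \<le> ln (real (box_count \<delta> A)) / ln (1 / \<delta>)"
proof -
  have "C * L ^ n \<le> 9 * real (box_count \<delta> A)"
    using assms(11) card_grid_cells_le_coarser[OF assms(2) _ finite_grid_cells[OF assms(1,2)], of d] assms(5)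
    unfolding box_count_eq_card_grid_cells by linarith
  then have "C / 9 * L ^ n \<le> real (box_count \<delta> A)" by simp
  moreover have "0 < C / 9 * L ^ n" using assms(7,8) by simp
  ultimately have "ln (C / 9 * L ^ n) \<le> ln (real (box_count \<delta> A))" by simp
  moreover have "ln (C / 9 * L ^ n) = ln (C / 9) + real n * ln L"
    using assms(7,8) by (simp only: ln_mult ln_realpow) simp_all
  ultimately have num_le: "ln (C / 9) + real n * ln L \<le> ln (real (box_count \<delta> A))" by simp
  have "1 / \<delta> \<le> B * Q ^ Suc n"
    using assms(3,4,12) order_trans[OF divide_left_mono] by fastforce
  then have "ln (1 / \<delta>) \<le> ln (B * Q ^ Suc n)"
    using assms(2) by (intro ln_mono) simp_all
  then have den_ge: "ln (1 / \<delta>) \<le> ln B + real (Suc n) * ln Q"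
    using assms(9,10) by (simp add: ln_mult ln_realpow algebra_simps)
  have pos: "0 < ln (1 / \<delta>)" using assms(2,5,6) by simp
  have "(ln (C / 9) + real n * ln L) / (ln B + real (Suc n) * ln Q)
      \<le> (ln (C / 9) + real n * ln L) / ln (1 / \<delta>)"
    using assms(13) den_ge pos by (intro divide_left_mono) auto
  also have "\<dots> \<le> ln (real (box_count \<delta> A)) / ln (1 / \<delta>)"
    using num_le pos by (intro divide_right_mono) auto
  finally show ?thesis .
qed

lemma lower_box_dim_ge_of_seq:
  fixes d :: "nat \<Rightarrow> real"
  assumes "bounded A" "d \<longlonglongrightarrow> 0" "0 < C" "1 < L" "1 < Q" "0 < B"
    and seq: "\<forall>\<^sub>F n in sequentially.
      0 < d n \<and> C * L ^ n \<le> real (box_count (d n) A) \<and> 1 / d n \<le> B * Q ^ n"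
  shows "ereal (ln L / ln Q) \<le> lower_box_dim A"
  unfolding lower_box_dim_def le_Liminf_iff
proof (intro allI impI)
  fix y assume y: "y < ereal (ln L / ln Q)"
  define num where "num n = ln (C / 9) + real n * ln L" for n
  define den where "den n = ln B + real (Suc n) * ln Q" for n
  have "(\<lambda>n. num n / den n) \<longlonglongrightarrow> ln L * inverse (ln Q)"
    unfolding num_def den_def using assms(4,5) by real_asymp
  then have "(\<lambda>n. ereal (num n / den n)) \<longlonglongrightarrow> ereal (ln L / ln Q)"
    by (intro tendsto_ereal) (simp add: divide_inverse)
  then have "\<forall>\<^sub>F n in sequentially. y < ereal (num n / den n)"
    using y by (rule order_tendstoD(1))
  moreover have "\<forall>\<^sub>F n in sequentially. 0 \<le> num n"
    unfolding num_def using assms(4) by real_asymp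
  moreover have "\<forall>\<^sub>F n in sequentially. d n < 1"
    using order_tendstoD(2)[OF assms(2)] by simp
  ultimately have "\<forall>\<^sub>F n in sequentially. y < ereal (num n / den n) \<and> 0 \<le> num n \<and> d n < 1 \<and>
      0 < d n \<and> C * L ^ n \<le> real (box_count (d n) A) \<and> 1 / d n \<le> B * Q ^ n"
    using seq by eventually_elim blast
  then obtain n1 where n1: "\<And>n. n1 \<le> n \<Longrightarrow> y < ereal (num n / den n) \<and> 0 \<le> num n \<and> d n < 1 \<and>
      0 < d n \<and> C * L ^ n \<le> real (box_count (d n) A) \<and> 1 / d n \<le> B * Q ^ n"
    unfolding eventually_sequentially by blast
  show "\<forall>\<^sub>F \<delta> in at_right 0. y < ereal (ln (real (box_count \<delta> A)) / ln (1 / \<delta>))"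
    unfolding eventually_at_right_field
  proof (intro exI[of _ "d n1"] conjI allI impI)
    show "0 < d n1" using n1 by blast
    fix \<delta> :: real assume \<delta>: "0 < \<delta>" "\<delta> < d n1"
    then obtain n where n: "n1 \<le> n" "d (Suc n) \<le> \<delta>" "\<delta> < d n"
      using tendsto_0_bracket[OF assms(2)] by blast
    have "num n / den n \<le> ln (real (box_count \<delta> A)) / ln (1 / \<delta>)"
      unfolding num_def den_def using n n1[OF n(1)] n1[of "Suc n"] \<delta>(1) assms
      by (intro box_count_log_ratio_ge[of A \<delta> "d (Suc n)" "d n" C L B Q]) (auto simp: num_def)
    then show "y < ereal (ln (real (box_count \<delta> A)) / ln (1 / \<delta>))"
      using n1[OF n(1)] by (metis ereal_less_eq(3) order_less_le_trans)
  qed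
qed

section \<open>Hoelder graphs\<close>

lemma norm_cis_diff_le: "norm (cis a - cis b) \<le> \<bar>a - b\<bar>"
proof -
  have "cis a - cis b = cis b * (cis (a - b) - 1)"
    by (simp add: algebra_simps cis_mult)
  then have "norm (cis a - cis b) = 2 * \<bar>sin ((a - b) / 2)\<bar>"
    using dist_exp_i_1[of "a - b"] by (simp add: norm_mult cis_conv_exp mult.commute)
  also have "\<dots> \<le> \<bar>a - b\<bar>" using abs_sin_x_le_abs_x[of "(a - b) / 2"] by simp
  finally show ?thesis .
qed

lemma norm_cis_diff_le_powr:
  assumes "0 < \<beta>" "\<beta> \<le> 1"
  shows "norm (cis a - cis b) \<le> 2 * \<bar>a - b\<bar> powr \<beta>"
proof (cases "\<bar>a - b\<bar> \<le> 1")
  case True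
  have "norm (cis a - cis b) \<le> \<bar>a - b\<bar> powr 1"
    using norm_cis_diff_le by (cases "a = b") simp_all
  also have "\<dots> \<le> \<bar>a - b\<bar> powr \<beta>"
    using True assms by (intro powr_mono') auto
  finally show ?thesis by (smt (verit) powr_ge_zero)
next
  case False
  then have "1 \<le> \<bar>a - b\<bar> powr \<beta>" using assms by (intro ge_one_powr_ge_zero) auto
  then show ?thesis using norm_triangle_ineq4[of "cis a" "cis b"] by simp
qed

lemma abs_norm_power2_diff_le:
  fixes a b :: "'a :: real_normed_vector"
  assumes "norm a \<le> B" "norm b \<le> B"
  shows "\<bar>(norm a)\<^sup>2 - (norm b)\<^sup>2\<bar> \<le> 2 * B * norm (a - b)"
proof -
  have "(norm a)\<^sup>2 - (norm b)\<^sup>2 = (norm a + norm b) * (norm a - norm b)"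
    by (simp add: power2_eq_square algebra_simps)
  then have "\<bar>(norm a)\<^sup>2 - (norm b)\<^sup>2\<bar> = (norm a + norm b) * \<bar>norm a - norm b\<bar>"
    by (simp add: abs_mult)
  also have "\<dots> \<le> (2 * B) * norm (a - b)"
    using assms norm_triangle_ineq3[of a b] order_trans[OF norm_ge_zero assms(1)] by (intro mult_mono) auto
  finally show ?thesis .
qed

lemma continuous_on_if_holder:
  fixes f :: "real \<Rightarrow> real"
  assumes "0 < \<beta>" and holder: "\<And>t t'. \<bar>f t - f t'\<bar> \<le> C * \<bar>t - t'\<bar> powr \<beta>"
  shows "continuous_on UNIV f"
  unfolding continuous_on_def
proof safe
  fix t0 :: real
  have "((\<lambda>t. C * \<bar>t - t0\<bar> powr \<beta>) \<longlongrightarrow> C * 0) (at t0 within UNIV)"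
    by (intro tendsto_mult tendsto_const tendsto_zero_powrI[where b = \<beta>])
      (auto intro!: tendsto_eq_intros simp: assms(1))
  then have "((\<lambda>t. C * \<bar>t - t0\<bar> powr \<beta>) \<longlongrightarrow> 0) (at t0 within UNIV)" by simp
  then have "((\<lambda>t. f t - f t0) \<longlongrightarrow> 0) (at t0 within UNIV)"
    by (rule Lim_null_comparison[rotated]) (use holder in simp)
  then show "(f \<longlongrightarrow> f t0) (at t0 within UNIV)" by (rule LIM_zero_cancel)
qed

lemma eventually_ge_power:
  fixes x :: real
  assumes "1 < x"
  shows "\<forall>\<^sub>F n in sequentially. y \<le> x ^ n"
proof -
  obtain N where "y < x ^ N" using real_arch_pow[OF assms] by blast
  moreover have "x ^ N \<le> x ^ n" if "N \<le> n" for n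
    using assms by (intro power_increasing[OF that]) simp
  ultimately have "y \<le> x ^ n" if "N \<le> n" for n
    using that by (meson less_le_trans less_imp_le)
  then show ?thesis unfolding eventually_sequentially by blast
qed

lemma box_count_graph_holder_le:
  fixes f :: "real \<Rightarrow> real"
  assumes "a \<le> b" "0 \<le> C" "0 < \<beta>" "\<beta> \<le> 1"
    and holder: "\<And>t t'. \<bar>f t - f t'\<bar> \<le> C * \<bar>t - t'\<bar> powr \<beta>"
    and \<delta>: "0 < \<delta>" "\<delta> < 1"
  shows "real (box_count \<delta> (graph_on {a..b} f)) \<le> (b - a + 2) * (2 * C + 2) * \<delta> powr (- (2 - \<beta>))"
proof -
  have osc: "\<bar>f t - f t'\<bar> \<le> C * \<delta> powr \<beta>" if "\<bar>t - t'\<bar> \<le> \<delta>" for t t'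
  proof -
    have "\<bar>t - t'\<bar> powr \<beta> \<le> \<delta> powr \<beta>" using that assms(3) by (intro powr_mono2) auto
    then show ?thesis using holder[of t t'] mult_left_mono[OF _ assms(2)] by (meson order_trans)
  qed
  have "real (box_count \<delta> (graph_on {a..b} f)) \<le> ((b - a) / \<delta> + 2) * (2 * (C * \<delta> powr \<beta>) / \<delta> + 2)"
    using assms \<delta> by (intro box_count_graph_le osc) auto
  also have "\<dots> \<le> ((b - a + 2) / \<delta>) * ((2 * C + 2) * \<delta> powr (\<beta> - 1))"
  proof (intro mult_mono)
    show "(b - a) / \<delta> + 2 \<le> (b - a + 2) / \<delta>"
      using \<delta> by (simp add: add_divide_distrib field_simps)
    have "\<delta> powr (1 - \<beta>) \<le> 1" using \<delta> assms(4) by (intro powr_le1) auto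
    moreover have "\<delta> powr (\<beta> - 1) = 1 / \<delta> powr (1 - \<beta>)"
      using \<delta> by (simp add: powr_minus_divide[symmetric])
    ultimately have "1 \<le> \<delta> powr (\<beta> - 1)"
      using \<delta> by (simp add: le_divide_eq)
    moreover have "C * \<delta> powr \<beta> / \<delta> = C * \<delta> powr (\<beta> - 1)"
      using \<delta> by (simp add: powr_diff)
    ultimately show "2 * (C * \<delta> powr \<beta>) / \<delta> + 2 \<le> (2 * C + 2) * \<delta> powr (\<beta> - 1)"
      by (simp add: distrib_right)
  qed (use assms \<delta> in auto)
  also have "\<dots> = (b - a + 2) * (2 * C + 2) * (\<delta> powr (\<beta> - 1) / \<delta> powr 1)"
    using \<delta> by simp
  also have "\<delta> powr (\<beta> - 1) / \<delta> powr 1 = \<delta> powr (- (2 - \<beta>))"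
    by (subst powr_diff[symmetric]) simp
  finally show ?thesis .
qed

lemma upper_box_dim_graph_holder_le:
  fixes f :: "real \<Rightarrow> real"
  assumes "a \<le> b" "0 \<le> C" "0 < \<beta>" "\<beta> \<le> 1"
    and "\<And>t t'. \<bar>f t - f t'\<bar> \<le> C * \<bar>t - t'\<bar> powr \<beta>"
  shows "upper_box_dim (graph_on {a..b} f) \<le> ereal (2 - \<beta>)"
proof (rule upper_box_dim_le_of_power_bound)
  show "real (box_count \<delta> (graph_on {a..b} f)) \<le> (b - a + 2) * (2 * C + 2) * \<delta> powr (- (2 - \<beta>))"
    if "0 < \<delta>" "\<delta> < 1" for \<delta>
    using box_count_graph_holder_le[OF assms that] .
  show "1 \<le> (b - a + 2) * (2 * C + 2)"
    using assms mult_mono[of 1 "b - a + 2" 1 "2 * C + 2"] by simp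
qed (use assms in simp)

section \<open>Oscillatory integrals and box counts\<close>

lemma has_integral_cis_linear:
  assumes "\<alpha> \<le> \<beta>" "\<xi> \<noteq> 0"
  shows "((\<lambda>t. cis (\<xi> * t)) has_integral (cis (\<xi> * \<beta>) - cis (\<xi> * \<alpha>)) / (\<i> * \<xi>)) {\<alpha>..\<beta>}"
proof -
  have "((\<lambda>t. cis (\<xi> * t) / (\<i> * \<xi>)) has_vector_derivative cis (\<xi> * t)) (at t within {\<alpha>..\<beta>})" for t
  proof -
    have "((\<lambda>t. cis (\<xi> * t)) has_derivative (\<lambda>h. (\<xi> * h) *\<^sub>R (\<i> * cis (\<xi> * t)))) (at t within {\<alpha>..\<beta>})"
      by (intro has_derivative_cis derivative_intros)
    then have "((\<lambda>t. cis (\<xi> * t)) has_vector_derivative (\<xi> *\<^sub>R (\<i> * cis (\<xi> * t)))) (at t within {\<alpha>..\<beta>})"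
      unfolding has_vector_derivative_def by (simp add: algebra_simps)
    then have "((\<lambda>t. cis (\<xi> * t) / (\<i> * \<xi>)) has_vector_derivative
        (\<xi> *\<^sub>R (\<i> * cis (\<xi> * t))) / (\<i> * \<xi>)) (at t within {\<alpha>..\<beta>})"
      by (rule has_vector_derivative_divide)
    moreover have "(\<xi> *\<^sub>R (\<i> * cis (\<xi> * t))) / (\<i> * \<xi>) = cis (\<xi> * t)"
      using assms(2) by (simp add: scaleR_conv_of_real field_simps)
    ultimately show ?thesis by simp
  qed
  then have "((\<lambda>t. cis (\<xi> * t)) has_integral
      cis (\<xi> * \<beta>) / (\<i> * \<xi>) - cis (\<xi> * \<alpha>) / (\<i> * \<xi>)) {\<alpha>..\<beta>}"
    by (intro fundamental_theorem_of_calculus[OF assms(1)]) auto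
  then show ?thesis by (simp add: diff_divide_distrib)
qed

lemma norm_integral_cis_linear_le:
  assumes "\<alpha> \<le> \<beta>" "\<xi> \<noteq> 0"
  shows "norm (integral {\<alpha>..\<beta>} (\<lambda>t. cis (\<xi> * t))) \<le> 2 / \<bar>\<xi>\<bar>"
proof -
  have "norm (integral {\<alpha>..\<beta>} (\<lambda>t. cis (\<xi> * t))) = norm (cis (\<xi> * \<beta>) - cis (\<xi> * \<alpha>)) / \<bar>\<xi>\<bar>"
    using integral_unique[OF has_integral_cis_linear[OF assms]] by (simp add: norm_divide norm_mult)
  also have "\<dots> \<le> 2 / \<bar>\<xi>\<bar>"
    using norm_triangle_ineq4[of "cis (\<xi> * \<beta>)" "cis (\<xi> * \<alpha>)"] by (intro divide_right_mono) auto
  finally show ?thesis .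
qed

lemma norm_integral_cis_linear_le_gap:
  assumes "\<alpha> \<le> \<beta>" "0 < B" "B / 2 \<le> \<bar>\<xi>\<bar>"
  shows "norm (integral {\<alpha>..\<beta>} (\<lambda>t. cis (\<xi> * t))) \<le> 4 / B"
proof -
  have "norm (integral {\<alpha>..\<beta>} (\<lambda>t. cis (\<xi> * t))) \<le> 2 / \<bar>\<xi>\<bar>"
    using assms by (intro norm_integral_cis_linear_le) auto
  also have "\<dots> \<le> 2 / (B / 2)"
    using assms by (intro divide_left_mono) auto
  finally show ?thesis by simp
qed

lemma integral_cis_period:
  assumes "0 < \<delta>" "\<omega> * \<delta> = 2 * pi"
  shows "integral {c..c + \<delta>} (\<lambda>t. cis (\<omega> * t)) = 0"
proof -
  have "cis (\<omega> * (c + \<delta>)) = cis (\<omega> * c)"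
    using assms(2) by (simp add: distrib_left flip: cis_mult)
  moreover have "\<omega> \<noteq> 0" using assms by auto
  ultimately show ?thesis
    using integral_unique[OF has_integral_cis_linear[of c "c + \<delta>" \<omega>]] assms(1) by simp
qed

text \<open>Over a full period the mean of \<open>f\<close> can be subtracted, so only the oscillation of \<open>f\<close> counts.\<close>

lemma norm_integral_mult_cis_period_le:
  fixes f :: "real \<Rightarrow> real"
  assumes "0 < \<delta>" "\<omega> * \<delta> = 2 * pi" "continuous_on {c..c + \<delta>} f"
    and bounds: "\<And>t. t \<in> {c..c + \<delta>} \<Longrightarrow> l \<le> f t \<and> f t \<le> h"
  shows "norm (integral {c..c + \<delta>} (\<lambda>t. f t * cis (\<omega> * t))) \<le> \<delta> * (h - l)"
proof -
  let ?g = "\<lambda>t. (f t - f c) * cis (\<omega> * t)"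
  have "(\<lambda>t. cis (\<omega> * t)) integrable_on {c..c + \<delta>}"
    by (intro integrable_continuous_interval continuous_intros)
  then have int_cis: "((\<lambda>t. cis (\<omega> * t)) has_integral 0) {c..c + \<delta>}"
    using integral_cis_period[OF assms(1,2), of c] by (simp add: has_integral_integral)
  have int_g: "(?g has_integral integral {c..c + \<delta>} ?g) {c..c + \<delta>}"
    by (intro integrable_integral integrable_continuous_interval continuous_intros assms(3))
  have "((\<lambda>t. ?g t + f c * cis (\<omega> * t)) has_integral integral {c..c + \<delta>} ?g + complex_of_real (f c) * 0) {c..c + \<delta>}"
    by (intro has_integral_add int_g has_integral_mult_right int_cis)
  then have "integral {c..c + \<delta>} (\<lambda>t. f t * cis (\<omega> * t)) = integral {c..c + \<delta>} ?g"
    by (simp add: algebra_simps integral_unique)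
  also have "norm \<dots> \<le> \<delta> * (h - l)"
  proof -
    have "0 \<le> h - l" using bounds[of c] assms(1) by simp
    moreover have "norm (?g t) \<le> h - l" if "t \<in> {c..c + \<delta>}" for t
      using bounds[of c] bounds[of t] that assms(1) by (simp add: norm_mult abs_le_iff del: of_real_diff)
    ultimately show ?thesis
      using has_integral_bound_real[OF _ _ int_g, of "h - l" "{}"] assms(1) by (simp add: mult.commute)
  qed
  finally show ?thesis .
qed

lemma norm_integral_diff_le:
  fixes f g :: "real \<Rightarrow> 'a::banach"
  assumes "continuous_on {a..b} f" "continuous_on {a..b} g" "a \<le> b"
    and bound: "\<And>t. t \<in> {a..b} \<Longrightarrow> norm (f t - g t) \<le> e"
  shows "norm (integral {a..b} f - integral {a..b} g) \<le> e * (b - a)"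
proof -
  have int: "((\<lambda>t. f t - g t) has_integral integral {a..b} f - integral {a..b} g) {a..b}"
    using assms(1,2) by (intro has_integral_diff integrable_integral integrable_continuous_interval)
  have "0 \<le> e" using bound[of a] assms(3) by (meson atLeastAtMost_iff norm_ge_zero order.trans order_refl)
  from has_integral_bound_real[OF this _ int, of "{}"] show ?thesis
    using bound assms(3) by simp
qed

lemma finite_column_cells:
  "finite (grid_cells \<delta> A) \<Longrightarrow> finite {m. (j, m) \<in> grid_cells \<delta> A}"
  by (rule finite_subset[OF _ finite_imageI[of _ snd]]) force+

lemma card_column_cells_ge:
  fixes f :: "real \<Rightarrow> real"
  assumes "0 < \<delta>" "{of_int j * \<delta>..(of_int j + 1) * \<delta>} \<subseteq> S"
    and "continuous_on {of_int j * \<delta>..(of_int j + 1) * \<delta>} f"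
    and "u \<in> {of_int j * \<delta>..(of_int j + 1) * \<delta>}" "v \<in> {of_int j * \<delta>..(of_int j + 1) * \<delta>}"
    and "finite (grid_cells \<delta> (graph_on S f))"
  shows "(f v - f u) / \<delta> - 1 \<le> real (card {m. (j, m) \<in> grid_cells \<delta> (graph_on S f)})"
proof -
  let ?C = "{of_int j * \<delta>..(of_int j + 1) * \<delta>}"
  have "{\<lceil>f u / \<delta>\<rceil>..\<lfloor>f v / \<delta>\<rfloor>} \<subseteq> {m. (j, m) \<in> grid_cells \<delta> (graph_on S f)}"
  proof
    fix m assume "m \<in> {\<lceil>f u / \<delta>\<rceil>..\<lfloor>f v / \<delta>\<rfloor>}"
    then have "f u / \<delta> \<le> of_int m" "of_int m \<le> f v / \<delta>"
      by (simp_all add: ceiling_le_iff le_floor_iff)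
    then have le: "f u \<le> of_int m * \<delta>" "of_int m * \<delta> \<le> f v"
      using assms(1) by (simp_all add: pos_divide_le_eq pos_le_divide_eq)
    have "of_int m * \<delta> \<in> f ` ?C"
      by (rule connectedD_interval[OF connected_continuous_image[OF assms(3) connected_Icc], of "f u" "f v"])
        (use assms(4,5) le in auto)
    then obtain t where t: "t \<in> ?C" "f t = of_int m * \<delta>" by auto
    then have "t \<in> S" using assms(2) by blast
    then show "m \<in> {m. (j, m) \<in> grid_cells \<delta> (graph_on S f)}"
      unfolding mem_grid_cells_graph using assms(1) t by auto
  qed
  then have "card {\<lceil>f u / \<delta>\<rceil>..\<lfloor>f v / \<delta>\<rfloor>} \<le> card {m. (j, m) \<in> grid_cells \<delta> (graph_on S f)}"
    by (intro card_mono finite_column_cells assms(6))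
  then show ?thesis
    using card_Icc_floor_ceiling_ge[of "f v / \<delta>" "f u / \<delta>"] by (simp add: diff_divide_distrib)
qed

lemma column_integral_le_card_cells:
  fixes f :: "real \<Rightarrow> real"
  assumes "0 < \<delta>" "\<omega> * \<delta> = 2 * pi" "{of_int j * \<delta>..(of_int j + 1) * \<delta>} \<subseteq> S"
    and "continuous_on S f" "finite (grid_cells \<delta> (graph_on S f))"
  shows "norm (integral {of_int j * \<delta>..(of_int j + 1) * \<delta>} (\<lambda>t. f t * cis (\<omega> * t))) / \<delta>\<^sup>2 - 1
    \<le> real (card {m. (j, m) \<in> grid_cells \<delta> (graph_on S f)})"
proof -
  let ?C = "{of_int j * \<delta>..(of_int j + 1) * \<delta>}"
  have cont: "continuous_on ?C f" using assms(3,4) by (rule continuous_on_subset[rotated])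
  have "?C \<noteq> {}" using assms(1) by simp
  then obtain u v where uv: "u \<in> ?C" "v \<in> ?C" "\<And>t. t \<in> ?C \<Longrightarrow> f u \<le> f t \<and> f t \<le> f v"
    using continuous_attains_inf[OF compact_Icc _ cont] continuous_attains_sup[OF compact_Icc _ cont]
    by meson
  have "?C = {of_int j * \<delta>..of_int j * \<delta> + \<delta>}" by (simp add: algebra_simps)
  then have "norm (integral ?C (\<lambda>t. f t * cis (\<omega> * t))) \<le> \<delta> * (f v - f u)"
    using cont uv(3) by (simp only:) (rule norm_integral_mult_cis_period_le[OF assms(1,2)])
  then have "norm (integral ?C (\<lambda>t. f t * cis (\<omega> * t))) / \<delta>\<^sup>2 \<le> (f v - f u) / \<delta>"
    using assms(1) by (simp add: field_simps power2_eq_square)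
  also have "\<dots> \<le> real (card {m. (j, m) \<in> grid_cells \<delta> (graph_on S f)}) + 1"
    using card_column_cells_ge[OF assms(1,3) cont uv(1,2) assms(5)] by simp
  finally show ?thesis by simp
qed

lemma integral_le_sum_card_column_cells:
  fixes f :: "real \<Rightarrow> real"
  assumes "0 < \<delta>" "\<omega> * \<delta> = 2 * pi" "j0 \<le> j" "{of_int j0 * \<delta>..of_int j * \<delta>} \<subseteq> S"
    and "continuous_on S f" "finite (grid_cells \<delta> (graph_on S f))"
  shows "norm (integral {of_int j0 * \<delta>..of_int j * \<delta>} (\<lambda>t. f t * cis (\<omega> * t))) / \<delta>\<^sup>2 - of_int (j - j0)
    \<le> (\<Sum>i\<in>{j0..<j}. real (card {m. (i, m) \<in> grid_cells \<delta> (graph_on S f)}))"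
  using assms(3,4)
proof (induction j rule: int_ge_induct)
  case base
  then show ?case by simp
next
  case (step j)
  let ?F = "\<lambda>t. f t * cis (\<omega> * t)" and ?col = "\<lambda>i. {m. (i, m) \<in> grid_cells \<delta> (graph_on S f)}"
  have le: "of_int j0 * \<delta> \<le> of_int j * \<delta>" "of_int j * \<delta> \<le> (of_int j + 1) * \<delta>"
    using step.hyps assms(1) by simp_all
  have sub: "{of_int j0 * \<delta>..(of_int j + 1) * \<delta>} \<subseteq> S"
    using step.prems by simp
  then have sub1: "{of_int j0 * \<delta>..of_int j * \<delta>} \<subseteq> S" and sub2: "{of_int j * \<delta>..(of_int j + 1) * \<delta>} \<subseteq> S"
    using le by (auto intro: order_trans[OF _ sub])
  have "integral {of_int j0 * \<delta>..(of_int j + 1) * \<delta>} ?F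
      = integral {of_int j0 * \<delta>..of_int j * \<delta>} ?F + integral {of_int j * \<delta>..(of_int j + 1) * \<delta>} ?F"
    using le sub
    by (intro Henstock_Kurzweil_Integration.integral_combine[symmetric] integrable_continuous_interval
        continuous_intros continuous_on_subset[OF assms(5)]) simp_all
  then have "norm (integral {of_int j0 * \<delta>..(of_int j + 1) * \<delta>} ?F) / \<delta>\<^sup>2
      \<le> norm (integral {of_int j0 * \<delta>..of_int j * \<delta>} ?F) / \<delta>\<^sup>2
        + norm (integral {of_int j * \<delta>..(of_int j + 1) * \<delta>} ?F) / \<delta>\<^sup>2"
    using divide_right_mono[OF norm_triangle_ineq, of "\<delta>\<^sup>2"] by (simp add: add_divide_distrib)
  moreover have "norm (integral {of_int j * \<delta>..(of_int j + 1) * \<delta>} ?F) / \<delta>\<^sup>2 - 1 \<le> real (card (?col j))"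
    by (rule column_integral_le_card_cells[OF assms(1,2) sub2 assms(5,6)])
  moreover have "{j0..<j + 1} = insert j {j0..<j}" using step.hyps by auto
  then have "(\<Sum>i\<in>{j0..<j + 1}. real (card (?col i))) = real (card (?col j)) + (\<Sum>i\<in>{j0..<j}. real (card (?col i)))"
    by simp
  moreover have "real_of_int (j + 1 - j0) = of_int (j - j0) + 1" by simp
  ultimately show ?case
    using step.IH[OF sub1] by simp
qed

lemma box_count_graph_ge_integral:
  fixes f :: "real \<Rightarrow> real"
  assumes "0 < \<delta>" "\<omega> * \<delta> = 2 * pi" "j0 \<le> j1" "{of_int j0 * \<delta>..of_int j1 * \<delta>} \<subseteq> S"
    and "continuous_on S f" "finite (grid_cells \<delta> (graph_on S f))"
  shows "norm (integral {of_int j0 * \<delta>..of_int j1 * \<delta>} (\<lambda>t. f t * cis (\<omega> * t))) / \<delta>\<^sup>2 - of_int (j1 - j0)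
    \<le> real (box_count \<delta> (graph_on S f))"
proof -
  define col where "col j = {m. (j, m) \<in> grid_cells \<delta> (graph_on S f)}" for j
  have "card (Sigma {j0..<j1} col) = (\<Sum>i\<in>{j0..<j1}. card (col i))"
    unfolding col_def using finite_column_cells[OF assms(6)] by (intro card_SigmaI) auto
  then have "norm (integral {of_int j0 * \<delta>..of_int j1 * \<delta>} (\<lambda>t. f t * cis (\<omega> * t))) / \<delta>\<^sup>2 - of_int (j1 - j0)
      \<le> real (card (Sigma {j0..<j1} col))"
    using integral_le_sum_card_column_cells[OF assms] unfolding col_def by simp
  moreover have "Sigma {j0..<j1} col \<subseteq> grid_cells \<delta> (graph_on S f)"
    unfolding col_def by blast
  then have "card (Sigma {j0..<j1} col) \<le> box_count \<delta> (graph_on S f)"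
    unfolding box_count_eq_card_grid_cells by (rule card_mono[OF assms(6)])
  ultimately show ?thesis by simp
qed

lemma grid_aligned_subinterval:
  fixes a b \<delta> :: real
  assumes "0 < \<delta>" "4 * \<delta> \<le> b - a"
  shows "a \<le> of_int \<lceil>a / \<delta>\<rceil> * \<delta>" "of_int \<lfloor>b / \<delta>\<rfloor> * \<delta> \<le> b" "\<lceil>a / \<delta>\<rceil> \<le> \<lfloor>b / \<delta>\<rfloor>"
    and "(b - a) / 2 \<le> of_int (\<lfloor>b / \<delta>\<rfloor> - \<lceil>a / \<delta>\<rceil>) * \<delta>"
proof -
  show a: "a \<le> of_int \<lceil>a / \<delta>\<rceil> * \<delta>"
    using assms(1) le_of_int_ceiling[of "a / \<delta>"] by (simp only: pos_divide_le_eq)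
  show b: "of_int \<lfloor>b / \<delta>\<rfloor> * \<delta> \<le> b"
    using assms(1) of_int_floor_le[of "b / \<delta>"] by (simp only: pos_le_divide_eq)
  have "of_int \<lceil>a / \<delta>\<rceil> * \<delta> \<le> a + \<delta>"
    using assms(1) of_int_ceiling_le_add_one[of "a / \<delta>"] by (simp add: field_simps)
  moreover have "b - \<delta> \<le> of_int \<lfloor>b / \<delta>\<rfloor> * \<delta>"
    using assms(1) real_of_int_floor_gt_diff_one[of "b / \<delta>"] by (simp add: field_simps)
  ultimately show "(b - a) / 2 \<le> of_int (\<lfloor>b / \<delta>\<rfloor> - \<lceil>a / \<delta>\<rceil>) * \<delta>"
    using assms(2) by (simp add: left_diff_distrib)
  moreover have "0 \<le> (b - a) / 2" using assms by simp
  ultimately have "0 \<le> of_int (\<lfloor>b / \<delta>\<rfloor> - \<lceil>a / \<delta>\<rceil>) * \<delta>"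
    by (rule order_trans[rotated])
  then show "\<lceil>a / \<delta>\<rceil> \<le> \<lfloor>b / \<delta>\<rfloor>"
    using assms(1) by (simp add: zero_le_mult_iff)
qed

section \<open>Points where the sines are not exponentially small\<close>

lemma quarter_le_sin:
  assumes "0 \<le> z" "z \<le> pi / 2"
  shows "z / 4 \<le> sin z"
proof (cases "z \<le> pi / 3")
  case True
  show ?thesis
  proof (cases "z = 0")
    case False
    then have "0 < z" using assms by simp
    then obtain \<xi> where \<xi>: "0 < \<xi>" "\<xi> < z" "sin z - sin 0 = (z - 0) * cos \<xi>"
      using MVT2[of 0 z sin cos] by (auto intro: DERIV_sin)
    have "1 / 2 \<le> cos \<xi>"
      using cos_monotone_0_pi_le[of \<xi> "pi / 3"] \<xi> True by (simp add: cos_60)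
    then have "z * (1 / 2) \<le> z * cos \<xi>" using \<open>0 < z\<close> by (intro mult_left_mono) auto
    then show ?thesis using \<xi>(3) \<open>0 < z\<close> by simp
  qed simp
next
  case False
  then have "sqrt 3 / 2 \<le> sin z"
    using sin_monotone_2pi_le[of "pi / 3" z] assms by (simp add: sin_60)
  moreover have "z / 4 \<le> 1 / 2" using assms pi_less_4 by simp
  moreover have "1 / 2 \<le> sqrt 3 / 2" by simp
  ultimately show ?thesis by linarith
qed

text \<open>Near each of its zeros \<open>k * pi\<close>, the sine grows at least linearly.\<close>

lemma dist_nearest_pi_multiple_lt:
  fixes y :: real
  assumes "\<bar>sin y\<bar> < \<eta>"
  shows "\<bar>y - of_int \<lfloor>y / pi + 1 / 2\<rfloor> * pi\<bar> < 4 * \<eta>"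
proof -
  define k where "k = \<lfloor>y / pi + 1 / 2\<rfloor>"
  define z where "z = y - of_int k * pi"
  have "of_int k \<le> y / pi + 1 / 2" "y / pi + 1 / 2 < of_int k + 1"
    unfolding k_def by linarith+
  then have "of_int k * pi \<le> y + pi / 2" "y - pi / 2 < of_int k * pi"
    using pi_gt_zero by (simp_all add: field_simps)
  then have z: "\<bar>z\<bar> \<le> pi / 2" unfolding z_def by linarith
  have "\<bar>z\<bar> / 4 \<le> \<bar>sin z\<bar>"
    using quarter_le_sin[of "\<bar>z\<bar>"] z by (cases "0 \<le> z") auto
  also have "\<bar>sin z\<bar> = \<bar>sin y\<bar>"
  proof -
    have sin_k: "sin (of_int k * pi) = 0" using sin_zero_iff_int2 by blast
    then have "\<bar>cos (of_int k * pi)\<bar> = 1" by (rule sin_zero_abs_cos_one)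
    then show ?thesis unfolding z_def by (simp add: sin_diff sin_k abs_mult)
  qed
  finally show ?thesis using assms unfolding z_def k_def by simp
qed

lemma small_sin_subset:
  assumes "1 \<le> m"
  shows "{x \<in> {0..pi}. \<bar>sin (real m * x)\<bar> < \<eta>} \<subseteq>
    (\<Union>k\<in>{0..m}. {(real k * pi - 4 * \<eta>) / real m..(real k * pi + 4 * \<eta>) / real m})"
proof
  fix x assume "x \<in> {x \<in> {0..pi}. \<bar>sin (real m * x)\<bar> < \<eta>}"
  then have x: "0 \<le> x" "x \<le> pi" and small: "\<bar>sin (real m * x)\<bar> < \<eta>" by auto
  define k where "k = \<lfloor>real m * x / pi + 1 / 2\<rfloor>"
  have near: "\<bar>real m * x - of_int k * pi\<bar> < 4 * \<eta>"
    unfolding k_def by (rule dist_nearest_pi_multiple_lt[OF small])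
  have "0 \<le> k" unfolding k_def using x by simp
  moreover have "real m * x / pi \<le> real m"
    using x assms by (simp add: divide_le_eq mult_left_mono)
  then have "k \<le> int m" unfolding k_def by (simp add: floor_le_iff)
  ultimately have "nat k \<in> {0..m}" by simp
  moreover have "(real (nat k) * pi - 4 * \<eta>) / real m \<le> x \<and> x \<le> (real (nat k) * pi + 4 * \<eta>) / real m"
    using near assms \<open>0 \<le> k\<close> by (auto simp: field_simps abs_less_iff)
  ultimately show "x \<in> (\<Union>k\<in>{0..m}. {(real k * pi - 4 * \<eta>) / real m..(real k * pi + 4 * \<eta>) / real m})"
    by auto
qed

lemma measure_small_sin_le:
  assumes "1 \<le> m" "0 < \<eta>"
  shows "measure lborel {x \<in> {0..pi}. \<bar>sin (real m * x)\<bar> < \<eta>} \<le> 16 * \<eta>"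
proof -
  define I where "I k = {(real k * pi - 4 * \<eta>) / real m..(real k * pi + 4 * \<eta>) / real m}" for k
  have "measure lborel {x \<in> {0..pi}. \<bar>sin (real m * x)\<bar> < \<eta>} \<le> measure lborel (\<Union>k\<in>{0..m}. I k)"
    unfolding I_def
    by (intro measure_mono_fmeasurable small_sin_subset assms(1) fmeasurable_compact compact_UN) auto
  also have "\<dots> \<le> (\<Sum>k\<in>{0..m}. measure lborel (I k))"
    by (rule measure_UNION_le) (auto simp: I_def)
  also have "\<dots> = (\<Sum>k\<in>{0..m}. 8 * \<eta> / real m)"
    unfolding I_def using assms by (intro sum.cong refl) (simp add: divide_right_mono field_simps)
  also have "\<dots> = 8 * \<eta> + 8 * \<eta> / real m"
    using assms(1) by (simp add: field_simps)
  also have "\<dots> \<le> 16 * \<eta>"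
    using assms by (simp add: field_simps)
  finally show ?thesis .
qed

lemma AE_eventually_power_le_abs_sin:
  assumes "1 \<le> q" "0 < \<rho>" "\<rho> < 1"
  shows "AE x in lborel. x \<in> {0..pi} \<longrightarrow> (\<forall>\<^sub>F n in sequentially. \<rho> ^ n \<le> \<bar>sin (real q ^ n * x)\<bar>)"
proof -
  define A where "A n = {x \<in> {0..pi}. \<bar>sin (real (q ^ n) * x)\<bar> < \<rho> ^ n}" for n
  have A_sets: "A n \<in> sets lborel" for n
    unfolding A_def by measurable
  have A_finite: "emeasure lborel (A n) < \<infinity>" for n
  proof -
    have "emeasure lborel (A n) \<le> emeasure lborel {0..pi}"
      unfolding A_def by (rule emeasure_mono) auto
    also have "\<dots> < \<infinity>" by simp
    finally show ?thesis .
  qed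
  have "measure lborel (A n) \<le> 16 * \<rho> ^ n" for n
    unfolding A_def using assms by (intro measure_small_sin_le) auto
  then have "summable (\<lambda>n. measure lborel (A n))"
    using assms(2,3) by (intro summable_comparison_test[OF _ summable_mult[OF summable_geometric]]) auto
  then have "AE x in lborel. \<forall>\<^sub>F n in sequentially. x \<in> space lborel - A n"
    by (rule borel_cantelli_AE1[OF A_sets A_finite])
  then show ?thesis
    by (rule AE_mp) (auto simp: A_def not_less elim: eventually_mono)
qed

definition sin_not_exp_small :: "nat \<Rightarrow> real \<Rightarrow> bool" where
  "sin_not_exp_small q x \<longleftrightarrow>
    (\<forall>e>0. \<forall>\<^sub>F n in sequentially. (real q powr (- e)) ^ n \<le> \<bar>sin (real q ^ n * x)\<bar>)"

lemma AE_sin_not_exp_small: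
  assumes "2 \<le> q"
  shows "AE x in lborel. x \<in> {0..pi} \<longrightarrow> sin_not_exp_small q x"
proof -
  define \<rho> where "\<rho> j = real q powr (- inverse (real (Suc j)))" for j
  have "0 < \<rho> j" "\<rho> j < 1" for j
    unfolding \<rho>_def using assms by (auto intro: powr_less_one)
  then have "AE x in lborel. x \<in> {0..pi} \<longrightarrow> (\<forall>\<^sub>F n in sequentially. \<rho> j ^ n \<le> \<bar>sin (real q ^ n * x)\<bar>)" for j
    using assms by (intro AE_eventually_power_le_abs_sin) auto
  then have "AE x in lborel. \<forall>j. x \<in> {0..pi} \<longrightarrow> (\<forall>\<^sub>F n in sequentially. \<rho> j ^ n \<le> \<bar>sin (real q ^ n * x)\<bar>)"
    by (subst AE_all_countable) blast
  then show ?thesis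
  proof (rule AE_mp, intro AE_I2 impI)
    fix x assume x: "x \<in> {0..pi}"
      and ev: "\<forall>j. x \<in> {0..pi} \<longrightarrow> (\<forall>\<^sub>F n in sequentially. \<rho> j ^ n \<le> \<bar>sin (real q ^ n * x)\<bar>)"
    show "sin_not_exp_small q x"
      unfolding sin_not_exp_small_def
    proof (intro allI impI)
      fix e :: real assume "0 < e"
      then obtain j where "inverse (real (Suc j)) < e" using reals_Archimedean by blast
      then have "real q powr (- e) \<le> \<rho> j"
        unfolding \<rho>_def using assms by (intro powr_mono) auto
      then have le: "(real q powr (- e)) ^ n \<le> \<rho> j ^ n" for n
        by (intro power_mono) auto
      have "\<forall>\<^sub>F n in sequentially. \<rho> j ^ n \<le> \<bar>sin (real q ^ n * x)\<bar>"
        using ev x by blast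
      then show "\<forall>\<^sub>F n in sequentially. (real q powr (- e)) ^ n \<le> \<bar>sin (real q ^ n * x)\<bar>"
        by (rule eventually_mono) (rule order_trans[OF le])
    qed
  qed
qed

section \<open>The density P\<close>

locale psi_setting =
  fixes q :: nat and s :: real
  assumes q_ge_2: "2 \<le> q" and s_pos: "0 < s" and s_lt_2: "s < 2"
begin

definition decay :: real where "decay = real q powr (s - 2)"

definition coeff :: "real \<Rightarrow> nat \<Rightarrow> real" where
  "coeff x n = real q powr (real n * (s - 2)) * sin (real q ^ n * x)"

definition freq :: "nat \<Rightarrow> real" where "freq n = real q ^ (2 * n)"

definition coeff_sum :: real where "coeff_sum = 1 / (1 - decay)"

definition Psi_trunc :: "real \<Rightarrow> nat \<Rightarrow> real \<Rightarrow> complex" where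
  "Psi_trunc x M t = NormConst q s * (\<Sum>n<M. coeff x n * cis (- (freq n * t)))"

lemma Psi_eq: "Psi q s x t = NormConst q s * (\<Sum>n. coeff x n * cis (- (freq n * t)))"
  unfolding Psi_def coeff_def freq_def ..

lemma q_gt_1: "1 < real q"
  using q_ge_2 by simp

lemma decay_pos: "0 < decay"
  unfolding decay_def using q_gt_1 by simp

lemma decay_less_1: "decay < 1"
  unfolding decay_def using q_gt_1 s_lt_2 by (intro powr_less_one) auto

lemma coeff_eq: "coeff x n = decay ^ n * sin (real q ^ n * x)"
  unfolding coeff_def decay_def using q_gt_1
  by (simp add: powr_realpow[symmetric] powr_powr mult.commute)

lemma abs_coeff_le: "\<bar>coeff x n\<bar> \<le> decay ^ n"
  unfolding coeff_eq using decay_pos by (simp add: abs_mult mult_left_le)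

lemma decay_sums: "(\<lambda>n. decay ^ n) sums coeff_sum"
  unfolding coeff_sum_def using decay_pos decay_less_1 by (intro geometric_sums) simp

lemma coeff_sum_pos: "0 < coeff_sum"
  unfolding coeff_sum_def using decay_less_1 by simp

lemma sum_abs_coeff_le:
  assumes "finite F"
  shows "(\<Sum>n\<in>F. \<bar>coeff x n\<bar>) \<le> coeff_sum"
proof -
  have "(\<Sum>n\<in>F. \<bar>coeff x n\<bar>) \<le> (\<Sum>n\<in>F. decay ^ n)"
    by (intro sum_mono abs_coeff_le)
  also have "\<dots> \<le> (\<Sum>n. decay ^ n)"
    using decay_pos by (intro sum_le_suminf sums_summable[OF decay_sums] assms) simp
  also have "\<dots> = coeff_sum"
    using decay_sums by (rule sums_unique[symmetric])
  finally show ?thesis .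
qed

lemma NormConst_pos: "0 < NormConst q s"
proof -
  have "real q powr (2 * (s - 2)) < 1" using q_gt_1 s_lt_2 by (intro powr_less_one) auto
  then show ?thesis unfolding NormConst_def by simp
qed

lemma summable_Psi_terms: "summable (\<lambda>n. coeff x n * cis (- (freq n * t)))"
  by (rule summable_norm_cancel, rule summable_comparison_test[OF _ sums_summable[OF decay_sums]])
    (simp add: norm_mult abs_coeff_le)

lemma norm_Psi_tail_le:
  "norm (\<Sum>n. coeff x (n + M) * cis (- (freq (n + M) * t))) \<le> decay ^ M * coeff_sum"
proof -
  have sums: "(\<lambda>n. decay ^ M * decay ^ n) sums (decay ^ M * coeff_sum)"
    by (intro sums_mult decay_sums)
  have "norm (coeff x (n + M) * cis (- (freq (n + M) * t))) \<le> decay ^ M * decay ^ n" for n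
    using abs_coeff_le[of x "n + M"] by (simp add: norm_mult power_add mult.commute)
  then have "norm (\<Sum>n. coeff x (n + M) * cis (- (freq (n + M) * t))) \<le> (\<Sum>n. decay ^ M * decay ^ n)"
    by (rule norm_suminf_le[OF _ sums_summable[OF sums]])
  also have "\<dots> = decay ^ M * coeff_sum"
    using sums by (rule sums_unique[symmetric])
  finally show ?thesis .
qed

lemma norm_Psi_le: "norm (Psi q s x t) \<le> NormConst q s * coeff_sum"
  using norm_Psi_tail_le[of x 0 t] NormConst_pos
  by (simp add: Psi_eq norm_mult mult_left_mono)

lemma norm_Psi_trunc_le: "norm (Psi_trunc x M t) \<le> NormConst q s * coeff_sum"
proof -
  have "norm (\<Sum>n<M. coeff x n * cis (- (freq n * t))) \<le> (\<Sum>n<M. \<bar>coeff x n\<bar>)"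
    by (rule order.trans[OF norm_sum]) (simp add: norm_mult)
  also have "\<dots> \<le> coeff_sum" by (simp add: sum_abs_coeff_le)
  finally show ?thesis
    unfolding Psi_trunc_def using NormConst_pos by (simp add: norm_mult mult_left_mono)
qed

lemma norm_Psi_minus_trunc_le:
  "norm (Psi q s x t - Psi_trunc x M t) \<le> NormConst q s * (decay ^ M * coeff_sum)"
proof -
  have "(\<Sum>n. coeff x n * cis (- (freq n * t))) = (\<Sum>n. coeff x (n + M) * cis (- (freq (n + M) * t)))
      + (\<Sum>n<M. coeff x n * cis (- (freq n * t)))"
    by (rule suminf_split_initial_segment[OF summable_Psi_terms])
  then have "Psi q s x t - Psi_trunc x M t
      = NormConst q s * (\<Sum>n. coeff x (n + M) * cis (- (freq (n + M) * t)))"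
    unfolding Psi_eq Psi_trunc_def by (simp add: algebra_simps)
  then show ?thesis
    using norm_Psi_tail_le NormConst_pos by (simp add: norm_mult mult_left_mono)
qed

lemma abs_Pdens_minus_trunc_le:
  "\<bar>Pdens q s x t - (norm (Psi_trunc x M t))\<^sup>2\<bar>
    \<le> 2 * (NormConst q s * coeff_sum) * (NormConst q s * (decay ^ M * coeff_sum))"
  unfolding Pdens_def
  using abs_norm_power2_diff_le[OF norm_Psi_le norm_Psi_trunc_le] norm_Psi_minus_trunc_le
    NormConst_pos coeff_sum_pos
  by (smt (verit) mult_left_mono mult_pos_pos)

lemma norm_Psi_term_diff_le:
  assumes "0 < \<beta>" "\<beta> \<le> 1"
  shows "norm (coeff x n * (cis (- (freq n * t)) - cis (- (freq n * t'))))
    \<le> 2 * \<bar>t - t'\<bar> powr \<beta> * (real q powr (s - 2 + 2 * \<beta>)) ^ n"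
proof -
  have "\<bar>- (freq n * t) - - (freq n * t')\<bar> = \<bar>freq n * (t - t')\<bar>"
    by (simp add: abs_minus_commute algebra_simps)
  then have "norm (cis (- (freq n * t)) - cis (- (freq n * t'))) \<le> 2 * \<bar>freq n * (t - t')\<bar> powr \<beta>"
    using norm_cis_diff_le_powr[OF assms, of "- (freq n * t)" "- (freq n * t')"] by simp
  then have "norm (coeff x n * (cis (- (freq n * t)) - cis (- (freq n * t'))))
      \<le> decay ^ n * (2 * \<bar>freq n * (t - t')\<bar> powr \<beta>)"
    unfolding norm_mult using abs_coeff_le decay_pos by (intro mult_mono) auto
  also have "\<dots> = 2 * (decay ^ n * \<bar>freq n * (t - t')\<bar> powr \<beta>)"
    by (rule mult.left_commute)
  also have "decay ^ n * \<bar>freq n * (t - t')\<bar> powr \<beta> = (real q powr (s - 2 + 2 * \<beta>)) ^ n * \<bar>t - t'\<bar> powr \<beta>"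
  proof -
    have "decay ^ n * freq n powr \<beta> = real q powr (real n * (s - 2)) * real q powr (real (2 * n) * \<beta>)"
      unfolding decay_def freq_def using q_gt_1
      by (simp add: powr_power powr_powr mult.commute flip: powr_realpow)
    also have "\<dots> = (real q powr (s - 2 + 2 * \<beta>)) ^ n"
      using q_gt_1 by (simp add: powr_power algebra_simps flip: powr_add)
    finally show ?thesis
      by (simp add: abs_mult powr_mult freq_def)
  qed
  finally show ?thesis by (simp add: algebra_simps)
qed

lemma norm_Psi_diff_le:
  assumes "0 < \<beta>" "\<beta> < 1 - s / 2"
  shows "norm (Psi q s x t - Psi q s x t')
    \<le> NormConst q s * (2 / (1 - real q powr (s - 2 + 2 * \<beta>))) * \<bar>t - t'\<bar> powr \<beta>"
proof -
  define g where "g = real q powr (s - 2 + 2 * \<beta>)"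
  have g: "0 < g" "g < 1"
    unfolding g_def using q_gt_1 assms(2) by (auto intro: powr_less_one)
  let ?F = "\<lambda>n. coeff x n * (cis (- (freq n * t)) - cis (- (freq n * t')))"
  have "norm (?F n) \<le> 2 * \<bar>t - t'\<bar> powr \<beta> * g ^ n" for n
    unfolding g_def using assms s_pos by (intro norm_Psi_term_diff_le) auto
  then have "norm (\<Sum>n. ?F n) \<le> (\<Sum>n. 2 * \<bar>t - t'\<bar> powr \<beta> * g ^ n)"
    using g by (intro norm_suminf_le summable_mult summable_geometric) auto
  also have "\<dots> = 2 * \<bar>t - t'\<bar> powr \<beta> / (1 - g)"
    using g by (simp add: suminf_mult suminf_geometric divide_inverse)
  finally have bound: "norm (\<Sum>n. ?F n) \<le> 2 / (1 - g) * \<bar>t - t'\<bar> powr \<beta>" by simp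
  have "(\<Sum>n. ?F n) = (\<Sum>n. coeff x n * cis (- (freq n * t))) - (\<Sum>n. coeff x n * cis (- (freq n * t')))"
    unfolding right_diff_distrib by (rule suminf_diff[symmetric, OF summable_Psi_terms summable_Psi_terms])
  then have "norm (Psi q s x t - Psi q s x t') = NormConst q s * norm (\<Sum>n. ?F n)"
    unfolding Psi_eq using NormConst_pos by (simp add: norm_mult flip: right_diff_distrib)
  also have "\<dots> \<le> NormConst q s * (2 / (1 - g) * \<bar>t - t'\<bar> powr \<beta>)"
    using bound NormConst_pos by (intro mult_left_mono) auto
  finally show ?thesis unfolding g_def by (simp only: mult.assoc)
qed

lemma Pdens_holder:
  assumes "0 < \<beta>" "\<beta> < 1 - s / 2"
  obtains C where "0 \<le> C" "\<And>t t'. \<bar>Pdens q s x t - Pdens q s x t'\<bar> \<le> C * \<bar>t - t'\<bar> powr \<beta>"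
proof
  define K where "K = NormConst q s * (2 / (1 - real q powr (s - 2 + 2 * \<beta>)))"
  have "real q powr (s - 2 + 2 * \<beta>) < 1"
    using q_gt_1 assms(2) by (intro powr_less_one) auto
  then show "0 \<le> 2 * (NormConst q s * coeff_sum) * K"
    unfolding K_def using NormConst_pos coeff_sum_pos by simp
  show "\<bar>Pdens q s x t - Pdens q s x t'\<bar> \<le> 2 * (NormConst q s * coeff_sum) * K * \<bar>t - t'\<bar> powr \<beta>" for t t'
    unfolding Pdens_def K_def
    using abs_norm_power2_diff_le[OF norm_Psi_le norm_Psi_le] norm_Psi_diff_le[OF assms, of x t t']
      NormConst_pos coeff_sum_pos
    by (smt (verit) mult_left_mono mult_pos_pos mult.assoc)
qed

lemma continuous_Pdens: "continuous_on UNIV (Pdens q s x)"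
proof -
  have "0 < (1 - s / 2) / 2" "(1 - s / 2) / 2 < 1 - s / 2" using s_lt_2 by simp_all
  then show ?thesis by (metis Pdens_holder continuous_on_if_holder)
qed

lemma upper_box_dim_graph_Pdens_le:
  assumes "a \<le> b"
  shows "upper_box_dim (graph_on {a..b} (Pdens q s x)) \<le> ereal (1 + s / 2)"
proof (rule ereal_le_epsilon2)
  fix e :: real assume "0 < e"
  define \<beta> where "\<beta> = max (1 - s / 2 - e) ((1 - s / 2) / 2)"
  have \<beta>: "0 < \<beta>" "\<beta> < 1 - s / 2" "\<beta> \<le> 1"
    unfolding \<beta>_def using \<open>0 < e\<close> s_pos s_lt_2 by (auto simp: max_def)
  obtain C where "0 \<le> C" "\<And>t t'. \<bar>Pdens q s x t - Pdens q s x t'\<bar> \<le> C * \<bar>t - t'\<bar> powr \<beta>"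
    using Pdens_holder[OF \<beta>(1,2)] by blast
  then have "upper_box_dim (graph_on {a..b} (Pdens q s x)) \<le> ereal (2 - \<beta>)"
    using upper_box_dim_graph_holder_le[OF assms _ \<beta>(1,3)] by blast
  also have "2 - \<beta> \<le> 1 + s / 2 + e" unfolding \<beta>_def by simp
  finally show "upper_box_dim (graph_on {a..b} (Pdens q s x)) \<le> ereal (1 + s / 2) + ereal e"
    by simp
qed

lemma freq_pos: "0 < freq n"
  unfolding freq_def using q_gt_1 by simp

lemma freq_mono: "m \<le> n \<Longrightarrow> freq m \<le> freq n"
  unfolding freq_def using q_gt_1 by (intro power_increasing) auto

lemma four_freq_le:
  assumes "m < n"
  shows "4 * freq m \<le> freq n"
proof -
  have "(4::real) = 2 ^ 2" by simp
  also have "\<dots> \<le> real q ^ 2" using q_ge_2 by (intro power_mono) auto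
  also have "\<dots> \<le> real q ^ (2 * (n - m))" using q_gt_1 assms by (intro power_increasing) auto
  finally have "4 * freq m \<le> real q ^ (2 * (n - m)) * freq m"
    using freq_pos[of m] by (intro mult_right_mono) auto
  moreover have "2 * (n - m) + 2 * m = 2 * n" using assms by simp
  then have "real q ^ (2 * (n - m)) * freq m = freq n"
    unfolding freq_def by (metis power_add)
  ultimately show ?thesis by simp
qed

lemma freq_gap:
  assumes "m \<noteq> k"
  shows "freq k / 2 \<le> \<bar>freq m - freq k\<bar>"
  using four_freq_le[of m k] four_freq_le[of k m] freq_pos[of m] freq_pos[of k] assms
  by (cases "m < k") auto

lemma freq_gap2:
  assumes "m \<noteq> n" "k < n"
  shows "freq n / 2 \<le> \<bar>freq n - freq k - freq m + freq m'\<bar>"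
  using four_freq_le[OF assms(2)] four_freq_le[of m n] four_freq_le[of n m] four_freq_le[of m' m]
    freq_mono[of m m'] freq_pos[of k] freq_pos[of m'] assms(1)
  by (cases "m < n"; cases "m' < m") auto

lemma freq_eq_power: "freq n = (real q ^ 2) ^ n"
  unfolding freq_def by (simp add: power_mult)

lemma q_powr_power_mult_freq: "(real q powr r) ^ n * freq n = (real q powr (r + 2)) ^ n"
proof -
  have "real q powr r * real q ^ 2 = real q powr (r + 2)"
    using q_gt_1 by (simp add: powr_add powr_numeral)
  then show ?thesis unfolding freq_eq_power by (simp flip: power_mult_distrib)
qed

lemma norm_Psi_trunc_sq_mult_cis:
  "(norm (Psi_trunc x M t))\<^sup>2 * cis (\<omega> * t) = (NormConst q s)\<^sup>2 *
    (\<Sum>m<M. \<Sum>m'<M. coeff x m * coeff x m' * cis ((\<omega> - freq m + freq m') * t))"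
proof -
  have "complex_of_real ((norm (Psi_trunc x M t))\<^sup>2) = Psi_trunc x M t * cnj (Psi_trunc x M t)"
    by (rule complex_norm_square)
  also have "\<dots> = (NormConst q s)\<^sup>2 *
      (\<Sum>m<M. \<Sum>m'<M. coeff x m * coeff x m' * (cis (- (freq m * t)) * cis (freq m' * t)))"
    unfolding Psi_trunc_def
    by (simp add: cis_cnj sum_product power2_eq_square algebra_simps) (subst sum.swap, simp add: algebra_simps)
  finally have "(norm (Psi_trunc x M t))\<^sup>2 * cis (\<omega> * t) = (NormConst q s)\<^sup>2 * (\<Sum>m<M. \<Sum>m'<M.
      coeff x m * coeff x m' * (cis (- (freq m * t)) * cis (freq m' * t) * cis (\<omega> * t)))"
    by (simp add: sum_distrib_right mult.assoc)
  moreover have "cis (- (freq m * t)) * cis (freq m' * t) * cis (\<omega> * t) = cis ((\<omega> - freq m + freq m') * t)"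
    for m m' by (simp add: cis_mult algebra_simps)
  ultimately show ?thesis by simp
qed

lemma integral_norm_Psi_trunc_sq_mult_cis:
  "integral {\<alpha>..\<beta>} (\<lambda>t. (norm (Psi_trunc x M t))\<^sup>2 * cis (\<omega> * t)) = (NormConst q s)\<^sup>2 *
    (\<Sum>m<M. \<Sum>m'<M. coeff x m * coeff x m' * integral {\<alpha>..\<beta>} (\<lambda>t. cis ((\<omega> - freq m + freq m') * t)))"
proof -
  have int: "(\<lambda>t. z * cis (c * t)) integrable_on {\<alpha>..\<beta>}" for z c
    by (intro integrable_continuous_interval continuous_intros)
  have int_sum: "(\<lambda>t. \<Sum>m'<M. z m' * cis (c m' * t)) integrable_on {\<alpha>..\<beta>}" for z c
    by (intro integrable_continuous_interval continuous_intros)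
  show ?thesis
    unfolding norm_Psi_trunc_sq_mult_cis by (simp add: integral_sum int int_sum)
qed

lemma norm_coeff_integral_cis_le:
  assumes "\<alpha> \<le> \<beta>" "0 < B" "B / 2 \<le> \<bar>\<xi>\<bar>"
  shows "norm (coeff x m * coeff x m' * integral {\<alpha>..\<beta>} (\<lambda>t. cis (\<xi> * t)))
    \<le> \<bar>coeff x m\<bar> * \<bar>coeff x m'\<bar> * (4 / B)"
proof -
  have "\<bar>coeff x m * coeff x m'\<bar> * norm (integral {\<alpha>..\<beta>} (\<lambda>t. cis (\<xi> * t)))
      \<le> \<bar>coeff x m * coeff x m'\<bar> * (4 / B)"
    using assms by (intro mult_left_mono norm_integral_cis_linear_le_gap) auto
  then show ?thesis
    unfolding norm_mult norm_of_real by (simp add: abs_mult)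
qed

lemma norm_fourier_row_le:
  assumes "\<alpha> \<le> \<beta>"
  shows "norm (\<Sum>m'\<in>{..<M} - {k}. coeff x n * coeff x m' *
      integral {\<alpha>..\<beta>} (\<lambda>t. cis ((freq n - freq k - freq n + freq m') * t)))
    \<le> 4 * coeff_sum * \<bar>coeff x n\<bar> / freq k"
proof -
  have "norm (\<Sum>m'\<in>{..<M} - {k}. coeff x n * coeff x m' *
      integral {\<alpha>..\<beta>} (\<lambda>t. cis ((freq n - freq k - freq n + freq m') * t)))
    \<le> (\<Sum>m'\<in>{..<M} - {k}. \<bar>coeff x n\<bar> * \<bar>coeff x m'\<bar> * (4 / freq k))"
    using assms freq_pos freq_gap by (intro order.trans[OF norm_sum sum_mono] norm_coeff_integral_cis_le) auto
  also have "\<dots> = \<bar>coeff x n\<bar> * (4 / freq k) * (\<Sum>m'\<in>{..<M} - {k}. \<bar>coeff x m'\<bar>)"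
    by (simp only: sum_distrib_left mult_ac)
  also have "\<dots> \<le> \<bar>coeff x n\<bar> * (4 / freq k) * coeff_sum"
    using freq_pos[of k] by (intro mult_left_mono sum_abs_coeff_le) auto
  finally show ?thesis by (simp add: mult_ac)
qed

lemma norm_fourier_off_rows_le:
  assumes "k < n" "\<alpha> \<le> \<beta>"
  shows "norm (\<Sum>m\<in>{..<M} - {n}. \<Sum>m'<M. coeff x m * coeff x m' *
      integral {\<alpha>..\<beta>} (\<lambda>t. cis ((freq n - freq k - freq m + freq m') * t)))
    \<le> 4 * coeff_sum\<^sup>2 / freq n"
proof -
  have "norm (\<Sum>m\<in>{..<M} - {n}. \<Sum>m'<M. coeff x m * coeff x m' *
      integral {\<alpha>..\<beta>} (\<lambda>t. cis ((freq n - freq k - freq m + freq m') * t)))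
    \<le> (\<Sum>m\<in>{..<M} - {n}. \<Sum>m'<M. \<bar>coeff x m\<bar> * \<bar>coeff x m'\<bar> * (4 / freq n))"
    using assms freq_pos freq_gap2
    by (intro order.trans[OF norm_sum sum_mono] order.trans[OF norm_sum sum_mono] norm_coeff_integral_cis_le) auto
  also have "\<dots> = (4 / freq n) * (\<Sum>m\<in>{..<M} - {n}. \<bar>coeff x m\<bar>) * (\<Sum>m'<M. \<bar>coeff x m'\<bar>)"
    by (simp only: sum_product sum_distrib_left mult_ac)
  also have "\<dots> \<le> (4 / freq n) * coeff_sum * coeff_sum"
    using freq_pos[of n] coeff_sum_pos sum_abs_coeff_le[of "{..<M} - {n}" x] sum_abs_coeff_le[of "{..<M}" x]
    by (intro mult_mono mult_left_mono) (simp_all add: sum_nonneg)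
  finally show ?thesis by (simp add: power2_eq_square)
qed

text \<open>Only the term \<open>(m, m') = (n, k)\<close> has frequency zero; all others oscillate at frequency
  at least \<open>freq k / 2\<close> (row \<open>m = n\<close>) or \<open>freq n / 2\<close> (all other rows).\<close>
lemma norm_trunc_fourier_sum_minus_le:
  assumes "k < n" "n < M" "\<alpha> \<le> \<beta>"
  shows "norm ((\<Sum>m<M. \<Sum>m'<M. coeff x m * coeff x m' *
      integral {\<alpha>..\<beta>} (\<lambda>t. cis ((freq n - freq k - freq m + freq m') * t))) - coeff x n * coeff x k * (\<beta> - \<alpha>))
    \<le> 4 * coeff_sum * \<bar>coeff x n\<bar> / freq k + 4 * coeff_sum\<^sup>2 / freq n"
proof -
  define X where "X m m' = coeff x m * coeff x m' *
      integral {\<alpha>..\<beta>} (\<lambda>t. cis ((freq n - freq k - freq m + freq m') * t))" for m m'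
  have "(\<Sum>m<M. \<Sum>m'<M. X m m') = X n k + (\<Sum>m'\<in>{..<M} - {k}. X n m') + (\<Sum>m\<in>{..<M} - {n}. \<Sum>m'<M. X m m')"
    using sum.remove[of "{..<M}" n "\<lambda>m. \<Sum>m'<M. X m m'"] sum.remove[of "{..<M}" k "X n"] assms(1,2)
    by simp
  moreover have "X n k = coeff x n * coeff x k * (\<beta> - \<alpha>)"
    unfolding X_def using assms(3) by (simp add: scaleR_conv_of_real algebra_simps)
  ultimately have "norm ((\<Sum>m<M. \<Sum>m'<M. X m m') - coeff x n * coeff x k * (\<beta> - \<alpha>))
      \<le> norm (\<Sum>m'\<in>{..<M} - {k}. X n m') + norm (\<Sum>m\<in>{..<M} - {n}. \<Sum>m'<M. X m m')"
    by (simp add: norm_triangle_ineq)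
  then show ?thesis
    using norm_fourier_row_le[OF assms(3), where M = M and k = k and x = x and n = n]
      norm_fourier_off_rows_le[OF assms(1,3), where M = M and x = x]
    unfolding X_def by linarith
qed

lemma norm_fourier_Pdens_minus_trunc_le:
  assumes "\<alpha> \<le> \<beta>"
  shows "norm (integral {\<alpha>..\<beta>} (\<lambda>t. Pdens q s x t * cis (\<omega> * t))
      - integral {\<alpha>..\<beta>} (\<lambda>t. (norm (Psi_trunc x M t))\<^sup>2 * cis (\<omega> * t)))
    \<le> 2 * (NormConst q s * coeff_sum) * (NormConst q s * (decay ^ M * coeff_sum)) * (\<beta> - \<alpha>)"
proof (rule norm_integral_diff_le[OF _ _ assms])
  show "continuous_on {\<alpha>..\<beta>} (\<lambda>t. Pdens q s x t * cis (\<omega> * t))"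
    using continuous_Pdens by (intro continuous_intros) (auto intro: continuous_on_subset)
  show "continuous_on {\<alpha>..\<beta>} (\<lambda>t. (norm (Psi_trunc x M t))\<^sup>2 * cis (\<omega> * t))"
    unfolding Psi_trunc_def by (intro continuous_intros)
  fix t
  have "Pdens q s x t * cis (\<omega> * t) - (norm (Psi_trunc x M t))\<^sup>2 * cis (\<omega> * t)
      = of_real (Pdens q s x t - (norm (Psi_trunc x M t))\<^sup>2) * cis (\<omega> * t)"
    by (simp only: of_real_diff left_diff_distrib)
  then show "norm (Pdens q s x t * cis (\<omega> * t) - (norm (Psi_trunc x M t))\<^sup>2 * cis (\<omega> * t))
      \<le> 2 * (NormConst q s * coeff_sum) * (NormConst q s * (decay ^ M * coeff_sum))"
    using abs_Pdens_minus_trunc_le[of x t M] by (simp only: norm_mult norm_cis norm_of_real mult_1_right)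
qed

lemma norm_fourier_trunc_minus_le:
  assumes "k < n" "n < M" "\<alpha> \<le> \<beta>"
  shows "norm (integral {\<alpha>..\<beta>} (\<lambda>t. (norm (Psi_trunc x M t))\<^sup>2 * cis ((freq n - freq k) * t))
      - (NormConst q s)\<^sup>2 * (coeff x n * coeff x k * (\<beta> - \<alpha>)))
    \<le> (NormConst q s)\<^sup>2 * (4 * coeff_sum * \<bar>coeff x n\<bar> / freq k + 4 * coeff_sum\<^sup>2 / freq n)"
proof -
  let ?S = "\<Sum>m<M. \<Sum>m'<M. coeff x m * coeff x m' *
    integral {\<alpha>..\<beta>} (\<lambda>t. cis ((freq n - freq k - freq m + freq m') * t))"
  have "integral {\<alpha>..\<beta>} (\<lambda>t. (norm (Psi_trunc x M t))\<^sup>2 * cis ((freq n - freq k) * t))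
      - (NormConst q s)\<^sup>2 * (coeff x n * coeff x k * (\<beta> - \<alpha>))
      = (NormConst q s)\<^sup>2 * (?S - coeff x n * coeff x k * (\<beta> - \<alpha>))"
    unfolding integral_norm_Psi_trunc_sq_mult_cis by (simp add: algebra_simps)
  then have "norm (integral {\<alpha>..\<beta>} (\<lambda>t. (norm (Psi_trunc x M t))\<^sup>2 * cis ((freq n - freq k) * t))
      - (NormConst q s)\<^sup>2 * (coeff x n * coeff x k * (\<beta> - \<alpha>)))
      = (NormConst q s)\<^sup>2 * norm (?S - coeff x n * coeff x k * (\<beta> - \<alpha>))"
    by (simp add: norm_mult norm_power)
  also have "\<dots> \<le> (NormConst q s)\<^sup>2 * (4 * coeff_sum * \<bar>coeff x n\<bar> / freq k + 4 * coeff_sum\<^sup>2 / freq n)"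
    by (intro mult_left_mono norm_trunc_fourier_sum_minus_le assms) simp
  finally show ?thesis .
qed

lemma norm_fourier_Pdens_minus_le:
  assumes "k < n" "\<alpha> \<le> \<beta>"
  shows "norm (integral {\<alpha>..\<beta>} (\<lambda>t. Pdens q s x t * cis ((freq n - freq k) * t))
      - (NormConst q s)\<^sup>2 * (coeff x n * coeff x k * (\<beta> - \<alpha>)))
    \<le> (NormConst q s)\<^sup>2 * (4 * coeff_sum * \<bar>coeff x n\<bar> / freq k + 4 * coeff_sum\<^sup>2 / freq n)"
    (is "norm (?I - ?X) \<le> ?B")
proof (rule LIMSEQ_le_const)
  define err where "err M = 2 * (NormConst q s * coeff_sum) * (NormConst q s * (decay ^ M * coeff_sum))" for M
  have "err \<longlonglongrightarrow> 2 * (NormConst q s * coeff_sum) * (NormConst q s * (0 * coeff_sum))"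
    unfolding err_def using decay_pos decay_less_1 by (intro tendsto_intros) simp
  then have "(\<lambda>M. ?B + err M * (\<beta> - \<alpha>)) \<longlonglongrightarrow> ?B + 0 * (\<beta> - \<alpha>)"
    by (intro tendsto_intros) simp
  then show "(\<lambda>M. ?B + err M * (\<beta> - \<alpha>)) \<longlonglongrightarrow> ?B" by simp
  have "norm (?I - ?X) \<le> ?B + err M * (\<beta> - \<alpha>)" if "n < M" for M
  proof -
    let ?J = "integral {\<alpha>..\<beta>} (\<lambda>t. (norm (Psi_trunc x M t))\<^sup>2 * cis ((freq n - freq k) * t))"
    have "norm (?I - ?X) \<le> norm (?I - ?J) + norm (?J - ?X)"
      using norm_triangle_ineq[of "?I - ?J" "?J - ?X"] by simp
    then show ?thesis
      using norm_fourier_Pdens_minus_trunc_le[OF assms(2), of x "freq n - freq k" M]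
        norm_fourier_trunc_minus_le[OF assms(1) that assms(2), of x]
      unfolding err_def by linarith
  qed
  then show "\<exists>N. \<forall>M\<ge>N. norm (?I - ?X) \<le> ?B + err M * (\<beta> - \<alpha>)"
    by (auto intro: exI[of _ "Suc n"])
qed

lemma norm_fourier_Pdens_ge:
  assumes "k < n" "\<alpha> \<le> \<beta>" "\<kappa> \<le> \<bar>coeff x k\<bar> * (\<beta> - \<alpha>) - 4 * coeff_sum / freq k"
  shows "(NormConst q s)\<^sup>2 * (\<bar>coeff x n\<bar> * \<kappa> - 4 * coeff_sum\<^sup>2 / freq n)
    \<le> norm (integral {\<alpha>..\<beta>} (\<lambda>t. Pdens q s x t * cis ((freq n - freq k) * t)))"
    (is "_ \<le> norm ?I")
proof -
  let ?X = "complex_of_real ((NormConst q s)\<^sup>2 * (coeff x n * coeff x k * (\<beta> - \<alpha>)))"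
  let ?E = "(NormConst q s)\<^sup>2 * (4 * coeff_sum * \<bar>coeff x n\<bar> / freq k + 4 * coeff_sum\<^sup>2 / freq n)"
  have "\<bar>coeff x n\<bar> * \<kappa> \<le> \<bar>coeff x n\<bar> * (\<bar>coeff x k\<bar> * (\<beta> - \<alpha>) - 4 * coeff_sum / freq k)"
    using assms(3) by (rule mult_left_mono) simp
  then have "(NormConst q s)\<^sup>2 * (\<bar>coeff x n\<bar> * \<kappa> - 4 * coeff_sum\<^sup>2 / freq n)
      \<le> (NormConst q s)\<^sup>2 * (\<bar>coeff x n\<bar> * \<bar>coeff x k\<bar> * (\<beta> - \<alpha>)
        - (4 * coeff_sum * \<bar>coeff x n\<bar> / freq k + 4 * coeff_sum\<^sup>2 / freq n))"
    by (intro mult_left_mono) (simp_all add: algebra_simps)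
  also have "\<dots> = norm ?X - ?E"
    using assms(2) by (simp only: norm_of_real abs_mult) (simp add: right_diff_distrib)
  also have "\<dots> \<le> norm ?I"
  proof -
    have "norm (?I - ?X) \<le> ?E"
      using norm_fourier_Pdens_minus_le[OF assms(1,2), of x] by simp
    moreover have "norm ?X - norm ?I \<le> norm (?I - ?X)"
      using norm_triangle_ineq3[of ?X ?I] by (simp add: norm_minus_commute)
    ultimately show ?thesis by linarith
  qed
  finally show ?thesis .
qed

definition scale :: "nat \<Rightarrow> nat \<Rightarrow> real" where
  "scale k n = 2 * pi / (freq n - freq k)"

lemma scale_bounds:
  assumes "k < n"
  shows "0 < scale k n" "(freq n - freq k) * scale k n = 2 * pi"
    and "2 * pi / freq n \<le> scale k n" "scale k n \<le> 8 * pi / (3 * freq n)"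
    and "1 / scale k n \<le> freq n"
proof -
  have gap: "3 / 4 * freq n \<le> freq n - freq k" "freq n - freq k \<le> freq n"
    using four_freq_le[OF assms] freq_pos[of k] by simp_all
  then have pos: "0 < freq n - freq k" using freq_pos[of n] by simp
  then show "0 < scale k n" "(freq n - freq k) * scale k n = 2 * pi"
    unfolding scale_def by simp_all
  show "2 * pi / freq n \<le> scale k n"
    unfolding scale_def using gap pos by (intro divide_left_mono) simp_all
  have "scale k n \<le> 2 * pi / (3 / 4 * freq n)"
    unfolding scale_def using gap pos freq_pos[of n] by (intro divide_left_mono) simp_all
  then show "scale k n \<le> 8 * pi / (3 * freq n)" by simp
  have "1 / scale k n = (freq n - freq k) / (2 * pi)"
    unfolding scale_def by simp
  also have "\<dots> \<le> freq n / (2 * pi)"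
    using gap by (intro divide_right_mono) auto
  also have "\<dots> \<le> freq n" using freq_pos[of n] pi_gt3 by (simp add: field_simps)
  finally show "1 / scale k n \<le> freq n" .
qed

lemma scale_tendsto_0: "scale k \<longlonglongrightarrow> 0"
proof (rule tendsto_sandwich[OF _ _ tendsto_const])
  have "1 < real q ^ 2" using q_gt_1 by (simp add: one_less_power)
  then have "(\<lambda>n. 8 * pi / 3 * inverse (freq n)) \<longlonglongrightarrow> 8 * pi / 3 * 0"
    unfolding freq_eq_power by (intro tendsto_mult tendsto_const LIMSEQ_inverse_realpow_zero)
  then show "(\<lambda>n. 8 * pi / 3 * inverse (freq n)) \<longlonglongrightarrow> 0" by simp
  show "\<forall>\<^sub>F n in sequentially. 0 \<le> scale k n"
    using eventually_gt_at_top[of k] by eventually_elim (rule less_imp_le[OF scale_bounds(1)])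
  show "\<forall>\<^sub>F n in sequentially. scale k n \<le> 8 * pi / 3 * inverse (freq n)"
    using eventually_gt_at_top[of k]
  proof eventually_elim
    case (elim n)
    have "scale k n \<le> 8 * pi / (3 * freq n)" by (rule scale_bounds(4)[OF elim])
    also have "\<dots> = 8 * pi / 3 * inverse (freq n)"
      by (simp only: divide_inverse inverse_mult_distrib mult.assoc)
    finally show ?case .
  qed
qed

lemma box_count_Pdens_ge:
  assumes "a < b" "k < n" "4 * scale k n \<le> b - a"
    and \<kappa>: "0 \<le> \<kappa>" "\<kappa> \<le> \<bar>coeff x k\<bar> * (b - a) / 2 - 4 * coeff_sum / freq k"
  shows "(NormConst q s)\<^sup>2 * (\<bar>coeff x n\<bar> * \<kappa> - 4 * coeff_sum\<^sup>2 / freq n) / (scale k n)\<^sup>2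
      - (b - a) / scale k n \<le> real (box_count (scale k n) (graph_on {a..b} (Pdens q s x)))"
proof -
  let ?\<delta> = "scale k n" and ?\<omega> = "freq n - freq k"
  define j0 where "j0 = \<lceil>a / ?\<delta>\<rceil>"
  define j1 where "j1 = \<lfloor>b / ?\<delta>\<rfloor>"
  note \<delta> = scale_bounds[OF assms(2)]
  note grid = grid_aligned_subinterval[OF \<delta>(1) assms(3), folded j0_def j1_def]
  let ?I = "integral {of_int j0 * ?\<delta>..of_int j1 * ?\<delta>} (\<lambda>t. Pdens q s x t * cis (?\<omega> * t))"
  have cont: "continuous_on {a..b} (Pdens q s x)"
    using continuous_Pdens by (rule continuous_on_subset) simp
  have "{of_int j0 * ?\<delta>..of_int j1 * ?\<delta>} \<subseteq> {a..b}"
    using grid(1,2) by auto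
  from box_count_graph_ge_integral[OF \<delta>(1) \<delta>(2) grid(3) this cont
      finite_grid_cells[OF bounded_graph_on[OF cont] \<delta>(1)]]
  have "norm ?I / ?\<delta>\<^sup>2 - of_int (j1 - j0) \<le> real (box_count ?\<delta> (graph_on {a..b} (Pdens q s x)))" .
  moreover have len: "of_int (j1 - j0) * ?\<delta> = of_int j1 * ?\<delta> - of_int j0 * ?\<delta>"
    by (simp only: of_int_diff left_diff_distrib)
  then have "of_int (j1 - j0) \<le> (b - a) / ?\<delta>"
    using grid(1,2) \<delta>(1) by (simp add: pos_le_divide_eq)
  moreover have "(NormConst q s)\<^sup>2 * (\<bar>coeff x n\<bar> * \<kappa> - 4 * coeff_sum\<^sup>2 / freq n) \<le> norm ?I"
  proof (rule norm_fourier_Pdens_ge[OF assms(2)])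
    show "of_int j0 * ?\<delta> \<le> of_int j1 * ?\<delta>"
      using grid(3) \<delta>(1) by (simp add: mult_right_mono)
    have "\<bar>coeff x k\<bar> * ((b - a) / 2) \<le> \<bar>coeff x k\<bar> * (of_int j1 * ?\<delta> - of_int j0 * ?\<delta>)"
      using grid(4) len by (intro mult_left_mono) simp_all
    then show "\<kappa> \<le> \<bar>coeff x k\<bar> * (of_int j1 * ?\<delta> - of_int j0 * ?\<delta>) - 4 * coeff_sum / freq k"
      using \<kappa>(2) by simp
  qed
  ultimately have "(NormConst q s)\<^sup>2 * (\<bar>coeff x n\<bar> * \<kappa> - 4 * coeff_sum\<^sup>2 / freq n) / ?\<delta>\<^sup>2
      \<le> real (box_count ?\<delta> (graph_on {a..b} (Pdens q s x))) + (b - a) / ?\<delta>"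
    using divide_right_mono[of _ "norm ?I" "?\<delta>\<^sup>2"] by fastforce
  then show ?thesis by simp
qed

lemma box_count_Pdens_ge_freq:
  assumes "a < b" "k < n" "4 * scale k n \<le> b - a"
    and "0 \<le> \<kappa>" "\<kappa> \<le> \<bar>coeff x k\<bar> * (b - a) / 2 - 4 * coeff_sum / freq k"
  shows "(NormConst q s)\<^sup>2 * \<kappa> * 9 / (64 * pi\<^sup>2) * \<bar>coeff x n\<bar> * (freq n)\<^sup>2
      - ((NormConst q s * coeff_sum)\<^sup>2 / pi\<^sup>2 + (b - a) / (2 * pi)) * freq n
    \<le> real (box_count (scale k n) (graph_on {a..b} (Pdens q s x)))"
proof -
  let ?\<delta> = "scale k n" and ?N2 = "(NormConst q s)\<^sup>2"
  note \<delta> = scale_bounds[OF assms(2)]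
  have W: "0 < freq n" by (rule freq_pos)
  have inv_le: "1 / ?\<delta> \<le> freq n / (2 * pi)"
    using \<delta>(1,3) W by (simp add: field_simps)
  have inv_ge: "3 * freq n / (8 * pi) \<le> 1 / ?\<delta>"
    using \<delta>(1,4) W by (simp add: field_simps)
  have "?N2 * \<bar>coeff x n\<bar> * \<kappa> * (3 * freq n / (8 * pi))\<^sup>2 \<le> ?N2 * \<bar>coeff x n\<bar> * \<kappa> * (1 / ?\<delta>)\<^sup>2"
    using inv_ge assms(4) W by (intro mult_left_mono power_mono) auto
  moreover have "?N2 * (4 * coeff_sum\<^sup>2 / freq n) * (1 / ?\<delta>)\<^sup>2
      \<le> ?N2 * (4 * coeff_sum\<^sup>2 / freq n) * (freq n / (2 * pi))\<^sup>2"
    using inv_le \<delta>(1) W by (intro mult_left_mono power_mono) auto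
  moreover have "(b - a) * (1 / ?\<delta>) \<le> (b - a) * (freq n / (2 * pi))"
    using inv_le assms(1) by (intro mult_left_mono) auto
  moreover have "(NormConst q s)\<^sup>2 * \<kappa> * 9 / (64 * pi\<^sup>2) * \<bar>coeff x n\<bar> * (freq n)\<^sup>2
      = ?N2 * \<bar>coeff x n\<bar> * \<kappa> * (3 * freq n / (8 * pi))\<^sup>2"
    by (simp add: power2_eq_square)
  moreover have "((NormConst q s * coeff_sum)\<^sup>2 / pi\<^sup>2 + (b - a) / (2 * pi)) * freq n
      = ?N2 * (4 * coeff_sum\<^sup>2 / freq n) * (freq n / (2 * pi))\<^sup>2 + (b - a) * (freq n / (2 * pi))"
    using W by (simp add: power2_eq_square field_simps)
  moreover have "?N2 * (\<bar>coeff x n\<bar> * \<kappa> - 4 * coeff_sum\<^sup>2 / freq n) / ?\<delta>\<^sup>2 - (b - a) / ?\<delta>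
      = ?N2 * \<bar>coeff x n\<bar> * \<kappa> * (1 / ?\<delta>)\<^sup>2 - ?N2 * (4 * coeff_sum\<^sup>2 / freq n) * (1 / ?\<delta>)\<^sup>2
        - (b - a) * (1 / ?\<delta>)"
    by (simp add: power_one_over divide_inverse algebra_simps power_inverse)
  ultimately have "(NormConst q s)\<^sup>2 * \<kappa> * 9 / (64 * pi\<^sup>2) * \<bar>coeff x n\<bar> * (freq n)\<^sup>2
      - ((NormConst q s * coeff_sum)\<^sup>2 / pi\<^sup>2 + (b - a) / (2 * pi)) * freq n
    \<le> ?N2 * (\<bar>coeff x n\<bar> * \<kappa> - 4 * coeff_sum\<^sup>2 / freq n) / ?\<delta>\<^sup>2 - (b - a) / ?\<delta>"
    by linarith
  also have "\<dots> \<le> real (box_count ?\<delta> (graph_on {a..b} (Pdens q s x)))"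
    by (rule box_count_Pdens_ge[OF assms])
  finally show ?thesis .
qed

lemma eventually_abs_coeff_ge:
  assumes "\<forall>\<^sub>F n in sequentially. (real q powr (- e)) ^ n \<le> \<bar>sin (real q ^ n * x)\<bar>"
  shows "\<forall>\<^sub>F n in sequentially. (real q powr (s - 2 - e)) ^ n \<le> \<bar>coeff x n\<bar>"
  using assms
proof eventually_elim
  case (elim n)
  have "(real q powr (s - 2 - e)) ^ n = decay ^ n * (real q powr (- e)) ^ n"
  proof -
    have "real q powr (s - 2 - e) = real q powr (s - 2) * real q powr (- e)"
      by (simp flip: powr_add)
    then show ?thesis unfolding decay_def by (simp add: power_mult_distrib)
  qed
  also have "\<dots> \<le> decay ^ n * \<bar>sin (real q ^ n * x)\<bar>"
    using elim decay_pos by (intro mult_left_mono) auto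
  also have "\<dots> = \<bar>coeff x n\<bar>"
    unfolding coeff_eq using decay_pos by (simp add: abs_mult)
  finally show ?case .
qed

lemma exists_large_coeff:
  assumes "a < b" "e < s"
    and sin_lower: "\<forall>\<^sub>F n in sequentially. (real q powr (- e)) ^ n \<le> \<bar>sin (real q ^ n * x)\<bar>"
  obtains k \<kappa> where "0 < \<kappa>" "\<kappa> \<le> \<bar>coeff x k\<bar> * (b - a) / 2 - 4 * coeff_sum / freq k"
proof -
  define \<rho> where "\<rho> = real q powr (s - 2 - e)"
  have "1 < real q powr (s - e)" using q_gt_1 assms(2) by simp
  then have "\<forall>\<^sub>F k in sequentially. \<rho> ^ k \<le> \<bar>coeff x k\<bar> \<and> 16 * coeff_sum / (b - a) \<le> (real q powr (s - e)) ^ k"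
    using eventually_abs_coeff_ge[OF sin_lower] eventually_ge_power
    unfolding \<rho>_def by (intro eventually_conj)
  then obtain k where k: "\<rho> ^ k \<le> \<bar>coeff x k\<bar>" "16 * coeff_sum / (b - a) \<le> \<rho> ^ k * freq k"
    unfolding eventually_sequentially \<rho>_def q_powr_power_mult_freq by auto
  show ?thesis
  proof (rule that[of "\<rho> ^ k * (b - a) / 4" k])
    show "0 < \<rho> ^ k * (b - a) / 4" unfolding \<rho>_def using q_gt_1 assms(1) by simp
    have "4 * coeff_sum / freq k \<le> \<rho> ^ k * (b - a) / 4"
      using k(2) assms(1) freq_pos[of k] by (simp add: field_simps)
    moreover have "\<rho> ^ k * (b - a) / 2 \<le> \<bar>coeff x k\<bar> * (b - a) / 2"
      using k(1) assms(1) by (simp add: divide_right_mono mult_right_mono)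
    ultimately show "\<rho> ^ k * (b - a) / 4 \<le> \<bar>coeff x k\<bar> * (b - a) / 2 - 4 * coeff_sum / freq k"
      by linarith
  qed
qed

lemma eventually_box_count_Pdens_ge:
  assumes "a < b" "e < s"
    and sin_lower: "\<forall>\<^sub>F n in sequentially. (real q powr (- e)) ^ n \<le> \<bar>sin (real q ^ n * x)\<bar>"
  obtains k C where "0 < C" "\<forall>\<^sub>F n in sequentially.
    k < n \<and> C * (real q powr (s + 2 - e)) ^ n \<le> real (box_count (scale k n) (graph_on {a..b} (Pdens q s x)))"
proof -
  obtain k \<kappa> where \<kappa>: "0 < \<kappa>" "\<kappa> \<le> \<bar>coeff x k\<bar> * (b - a) / 2 - 4 * coeff_sum / freq k"
    using exists_large_coeff[OF assms] .
  define c1 where "c1 = (NormConst q s)\<^sup>2 * \<kappa> * 9 / (64 * pi\<^sup>2)"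
  define c2 where "c2 = (NormConst q s * coeff_sum)\<^sup>2 / pi\<^sup>2 + (b - a) / (2 * pi)"
  have c1_pos: "0 < c1" unfolding c1_def using NormConst_pos \<kappa>(1) by simp
  have "1 < real q ^ 2" using q_gt_1 by (simp add: one_less_power)
  then have "\<forall>\<^sub>F n in sequentially. 32 * pi / (3 * (b - a)) \<le> freq n"
    unfolding freq_eq_power by (rule eventually_ge_power)
  moreover have "\<forall>\<^sub>F n in sequentially. k < n" by (rule eventually_gt_at_top)
  moreover note eventually_abs_coeff_ge[OF sin_lower]
  moreover have "1 < real q powr (s - e)" using q_gt_1 assms(2) by simp
  note eventually_ge_power[OF this, of "c2 / (c1 / 2)"]
  ultimately have "\<forall>\<^sub>F n in sequentially.
      k < n \<and> c1 / 2 * (real q powr (s + 2 - e)) ^ n \<le> real (box_count (scale k n) (graph_on {a..b} (Pdens q s x)))"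
  proof eventually_elim
    case (elim n)
    have "scale k n \<le> 8 * pi / (3 * freq n)" by (rule scale_bounds(4)[OF elim(2)])
    also have "\<dots> \<le> (b - a) / 4"
      using elim(1) assms(1) freq_pos[of n] by (simp add: field_simps)
    finally have "c1 * \<bar>coeff x n\<bar> * (freq n)\<^sup>2 - c2 * freq n
        \<le> real (box_count (scale k n) (graph_on {a..b} (Pdens q s x)))"
      unfolding c1_def c2_def using \<kappa> by (intro box_count_Pdens_ge_freq[OF assms(1) elim(2)]) auto
    moreover have "c1 * (real q powr (s + 2 - e)) ^ n \<le> c1 * \<bar>coeff x n\<bar> * (freq n)\<^sup>2"
    proof -
      have "(real q powr (s + 2 - e)) ^ n = (real q powr (s - 2 - e)) ^ n * freq n * freq n"
        using q_powr_power_mult_freq[of "s - 2 - e" n] q_powr_power_mult_freq[of "s - e" n]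
        by (simp add: diff_add_eq)
      also have "\<dots> \<le> \<bar>coeff x n\<bar> * freq n * freq n"
        using elim(3) freq_pos[of n] by (intro mult_right_mono) auto
      finally show ?thesis
        using c1_pos by (simp add: power2_eq_square mult.assoc mult_left_mono)
    qed
    moreover have "c2 * freq n \<le> c1 / 2 * (real q powr (s + 2 - e)) ^ n"
    proof -
      have "c2 * freq n \<le> c1 / 2 * (real q powr (s - e)) ^ n * freq n"
        using elim(4) c1_pos freq_pos[of n] by (intro mult_right_mono) (simp_all add: field_simps)
      also have "\<dots> = c1 / 2 * ((real q powr (s - e)) ^ n * freq n)"
        by (rule mult.assoc)
      also have "(real q powr (s - e)) ^ n * freq n = (real q powr (s + 2 - e)) ^ n"
        using q_powr_power_mult_freq[of "s - e" n] by (simp add: diff_add_eq)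
      finally show ?thesis .
    qed
    ultimately show ?case using elim(2) by linarith
  qed
  then show ?thesis using c1_pos by (intro that[of "c1 / 2" k]) auto
qed

lemma lower_box_dim_graph_Pdens_ge_of_sin_bound:
  assumes "a < b" "e < s"
    and sin_lower: "\<forall>\<^sub>F n in sequentially. (real q powr (- e)) ^ n \<le> \<bar>sin (real q ^ n * x)\<bar>"
  shows "ereal ((s + 2 - e) / 2) \<le> lower_box_dim (graph_on {a..b} (Pdens q s x))"
proof -
  obtain k C where C: "0 < C" "\<forall>\<^sub>F n in sequentially.
    k < n \<and> C * (real q powr (s + 2 - e)) ^ n \<le> real (box_count (scale k n) (graph_on {a..b} (Pdens q s x)))"
    using eventually_box_count_Pdens_ge[OF assms] by blast
  have "\<forall>\<^sub>F n in sequentially. 0 < scale k n \<and>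
      C * (real q powr (s + 2 - e)) ^ n \<le> real (box_count (scale k n) (graph_on {a..b} (Pdens q s x))) \<and>
      1 / scale k n \<le> 1 * (real q ^ 2) ^ n"
    using C(2)
  proof eventually_elim
    case (elim n)
    then show ?case using scale_bounds(1,5)[of k n] freq_eq_power[of n] by simp
  qed
  moreover have "continuous_on {a..b} (Pdens q s x)"
    using continuous_Pdens by (rule continuous_on_subset) simp
  moreover have "1 < real q powr (s + 2 - e)" using q_gt_1 assms(2) s_pos by simp
  moreover have "1 < real q ^ 2" using q_gt_1 by (simp add: one_less_power)
  ultimately have "ereal (ln (real q powr (s + 2 - e)) / ln (real q ^ 2))
      \<le> lower_box_dim (graph_on {a..b} (Pdens q s x))"
    using C(1) scale_tendsto_0 by (intro lower_box_dim_ge_of_seq[where B = 1] bounded_graph_on) auto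
  moreover have "ln (real q powr (s + 2 - e)) / ln (real q ^ 2) = (s + 2 - e) / 2"
  proof -
    have "ln (real q ^ 2) = 2 * ln (real q)" using q_gt_1 by (simp add: power2_eq_square ln_mult)
    then show ?thesis using q_gt_1 by (simp add: ln_powr)
  qed
  ultimately show ?thesis by (simp only:)
qed

lemma lower_box_dim_graph_Pdens_ge:
  assumes "a < b" "sin_not_exp_small q x"
  shows "ereal (1 + s / 2) \<le> lower_box_dim (graph_on {a..b} (Pdens q s x))"
proof (rule ereal_le_epsilon2)
  fix \<epsilon> :: real assume "0 < \<epsilon>"
  define e where "e = min (s / 2) \<epsilon>"
  have e: "0 < e" "e < s" "e \<le> \<epsilon>"
    unfolding e_def using \<open>0 < \<epsilon>\<close> s_pos by auto
  then have "ereal ((s + 2 - e) / 2) \<le> lower_box_dim (graph_on {a..b} (Pdens q s x))"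
    using assms unfolding sin_not_exp_small_def by (intro lower_box_dim_graph_Pdens_ge_of_sin_bound) auto
  moreover have "1 + s / 2 \<le> (s + 2 - e) / 2 + \<epsilon>"
    using e by (simp add: field_simps)
  then have "ereal (1 + s / 2) \<le> ereal ((s + 2 - e) / 2) + ereal \<epsilon>"
    by simp
  ultimately show "ereal (1 + s / 2) \<le> lower_box_dim (graph_on {a..b} (Pdens q s x)) + ereal \<epsilon>"
    by (meson add_right_mono order_trans)
qed

lemma has_box_dim_graph_Pdens:
  assumes "a < b" "sin_not_exp_small q x"
  shows "has_box_dim (graph_on {a..b} (Pdens q s x)) (1 + s / 2)"
proof -
  let ?G = "graph_on {a..b} (Pdens q s x)"
  have "lower_box_dim ?G \<le> upper_box_dim ?G"
    unfolding lower_box_dim_def upper_box_dim_def by (rule Liminf_le_Limsup) simp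
  then show ?thesis
    using upper_box_dim_graph_Pdens_le[of a b x] lower_box_dim_graph_Pdens_ge[OF assms] assms(1)
    unfolding has_box_dim_def by auto
qed

end

theorem theorem1:
  fixes q :: nat and s :: real
  assumes "q \<ge> 2" and "0 < s" and "s < 2"
  shows "AE x in lborel. x \<in> {0..pi} \<longrightarrow>
           (\<forall>a b :: real. a < b \<longrightarrow>
              has_box_dim ((\<lambda>t. (t, Pdens q s x t)) ` {a..b}) (1 + s / 2))"
proof -
  interpret psi_setting q s
    using assms by unfold_locales
  show ?thesis
    using AE_sin_not_exp_small[OF assms(1)]
    by (rule AE_mp) (auto intro!: AE_I2 has_box_dim_graph_Pdens)
qed

end
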